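(* Consider the semidiscrete DG scheme described in the context on a single element $\Omega_j$. Suppose that at time $t$ the element values $u^h(\cdot,t)\in\Pi^q$, $v^h(\cdot,t)\in\Pi^s$ on $\Omega_j$ are given, and that the boundary states (fluxes) $v^*$ and $\nabla u^*$ on $\partial\Omega_j$ are given. Then the time derivatives $\partial_t u^h$ and $\partial_t v^h$ on $\Omega_j$ are uniquely determined by the equations (1), (2), (3) below (for all admissible test functions), and the discrete energy $E_j^h(t)=\int_{\Omega_j}\tfrac12 (v^h)^2+\tfrac12 c^2|\nabla u^h|^2$ satisfies \begin{multline*} \frac{dE_j^h}{dt}=\int_{\partial\Omega_j}\Big[-\tfrac12 c^2|\nabla u^h|^2\,\mathbf{w}\cdot\mathbf{n}-\tfrac12 (v^h)^2\,\mathbf{w}\cdot\mathbf{n}+c^2(v^*-v^h)\nabla u^h\cdot\mathbf{n}\\ -c^2\nabla u^h\cdot(\nabla u^*-\nabla u^h)\,\mathbf{w}\cdot\mathbf{n}+c^2 v^h\nabla u^*\cdot\mathbf{n}-v^h(v^*-v^h)\,\mathbf{w}\cdot\mathbf{n}\Big]. \end{multline*}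
   Context: Let $m\ge1$, $c>0$ and a constant vector $\mathbf{w}\in\mathbb{R}^m$. The advective wave equation $(\partial_t+\mathbf{w}\cdot\nabla)^2u=c^2\Delta u$ is written as the first-order-in-time system $\partial_t u+\mathbf{w}\cdot\nabla u-v=0$, $\partial_t v+\mathbf{w}\cdot\nabla v-c^2\Delta u=0$. The domain is partitioned into elements $\Omega_j$; $\mathbf{n}$ denotes the outward unit normal on $\partial\Omega_j$. On $\Omega_j$ the approximations $u^h$ and $v^h$ are polynomials of degree $q$ and $s$ respectively ($\Pi^q$, $\Pi^s$ denote the polynomial spaces of degrees $q$, $s$ in $m$ variables). The local scheme on $\Omega_j$ is: for all $\phi_u\in\Pi^q$, all $\phi_v\in\Pi^s$ and all constants $\tilde\phi_u$, (1) $\int_{\Omega_j}c^2\nabla\phi_u\cdot\nabla(\partial_t u^h+\mathbf{w}\cdot\nabla u^h-v^h)=\int_{\partial\Omega_j}c^2(v^*-v^h)\nabla\phi_u\cdot\mathbf{n}-c^2\nabla\phi_u\cdot(\nabla u^*-\nabla u^h)\,\mathbf{w}\cdot\mathbf{n}$, (2) $\int_{\Omega_j}\phi_v\partial_t v^h+\phi_v\mathbf{w}\cdot\nabla v^h+c^2\nabla u^h\cdot\nabla\phi_v=\int_{\partial\Omega_j}c^2\phi_v\nabla u^*\cdot\mathbf{n}-(v^*-v^h)\phi_v\,\mathbf{w}\cdot\mathbf{n}$, (3) $\int_{\Omega_j}\tilde\phi_u(\partial_t u^h+\mathbf{w}\cdot\nabla u^h-v^h)=0$. Here $v^*$ (scalar)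 and $\nabla u^*$ (vector) are given functions on $\partial\Omega_j$ (the numerical fluxes). *)

theory Defs
  imports "HOL-Analysis.Analysis"
begin

text \<open>Points of R^m are vectors of type real^'n (m = CARD('n)).\<close>

definition multi_idx :: "nat \<Rightarrow> ('n::finite \<Rightarrow> nat) set" where
  "multi_idx q = {\<alpha>. sum \<alpha> UNIV \<le> q}"

definition monomial_fn :: "('n::finite \<Rightarrow> nat) \<Rightarrow> real^'n \<Rightarrow> real" where
  "monomial_fn \<alpha> x = (\<Prod>i\<in>UNIV. (x $ i) ^ (\<alpha> i))"

definition polys :: "nat \<Rightarrow> (real^'n::finite \<Rightarrow> real) set" where
  "polys q = {f. \<exists>c. f = (\<lambda>x. \<Sum>\<alpha>\<in>multi_idx q. c \<alpha> * monomial_fn \<alpha> x)}"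

definition grad :: "(real^'n::finite \<Rightarrow> real) \<Rightarrow> real^'n \<Rightarrow> real^'n" where
  "grad f x = (\<chi> i. frechet_derivative f (at x) (axis i 1))"

text \<open>A single element: a nonempty bounded open set, a finite measure S (surface
measure) concentrated on its boundary, and an outward unit normal nrm, such that the
divergence theorem holds for polynomial fields.\<close>
definition dg_element :: "(real^'n::finite) set \<Rightarrow> (real^'n) measure \<Rightarrow> (real^'n \<Rightarrow> real^'n) \<Rightarrow> bool" where
  "dg_element \<Omega> S nrm \<longleftrightarrow>
     open \<Omega> \<and> bounded \<Omega> \<and> \<Omega> \<noteq> {} \<and>
     sets S = sets lborel \<and> emeasure S (space S) < \<infinity> \<and>
     (AE x in S. x \<in> frontier \<Omega>) \<and>
     nrm \<in> borel_measurable S \<and> (AE x in S. norm (nrm x) = 1) \<and>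
     (\<forall>g k i. g \<in> polys k \<longrightarrow>
        (LINT x:\<Omega>|lborel. frechet_derivative g (at x) (axis i 1))
          = (LINT x|S. g x * (nrm x $ i)))"

definition flux_ok :: "(real^'n::finite) set \<Rightarrow> (real^'n) measure \<Rightarrow> (real^'n \<Rightarrow> real) \<Rightarrow> (real^'n \<Rightarrow> real^'n) \<Rightarrow> bool" where
  "flux_ok \<Omega> S vs gs \<longleftrightarrow>
     vs \<in> borel_measurable S \<and> gs \<in> borel_measurable S \<and>
     bounded (vs ` frontier \<Omega>) \<and> bounded (gs ` frontier \<Omega>)"

text \<open>The local scheme (1)-(3): u, v element values, vs = v^*, gs = grad u^*,
ut, vt the time derivatives.\<close>
definition dg_scheme ::
  "(real^'n::finite) set \<Rightarrow> (real^'n) measure \<Rightarrow> (real^'n \<Rightarrow> real^'n) \<Rightarrow> real \<Rightarrow> real^'n \<Rightarrow> nat \<Rightarrow> nat \<Rightarrow>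
   (real^'n \<Rightarrow> real) \<Rightarrow> (real^'n \<Rightarrow> real) \<Rightarrow> (real^'n \<Rightarrow> real) \<Rightarrow> (real^'n \<Rightarrow> real^'n) \<Rightarrow>
   (real^'n \<Rightarrow> real) \<Rightarrow> (real^'n \<Rightarrow> real) \<Rightarrow> bool" where
  "dg_scheme \<Omega> S nrm c w q s u v vs gs ut vt \<longleftrightarrow>
     (\<forall>\<phi>\<in>polys q.
        (LINT x:\<Omega>|lborel. c\<^sup>2 * (grad \<phi> x \<bullet> grad (\<lambda>y. ut y + w \<bullet> grad u y - v y) x))
        = (LINT x|S. c\<^sup>2 * (vs x - v x) * (grad \<phi> x \<bullet> nrm x)
                     - c\<^sup>2 * (grad \<phi> x \<bullet> (gs x - grad u x)) * (w \<bullet> nrm x))) \<and>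
     (\<forall>\<phi>\<in>polys s.
        (LINT x:\<Omega>|lborel. \<phi> x * vt x + \<phi> x * (w \<bullet> grad v x) + c\<^sup>2 * (grad u x \<bullet> grad \<phi> x))
        = (LINT x|S. c\<^sup>2 * \<phi> x * (gs x \<bullet> nrm x) - (vs x - v x) * \<phi> x * (w \<bullet> nrm x))) \<and>
     (\<forall>k::real. (LINT x:\<Omega>|lborel. k * (ut x + w \<bullet> grad u x - v x)) = 0)"

definition dg_energy :: "(real^'n::finite) set \<Rightarrow> real \<Rightarrow> (real^'n \<Rightarrow> real) \<Rightarrow> (real^'n \<Rightarrow> real) \<Rightarrow> real" where
  "dg_energy \<Omega> c u v = (LINT x:\<Omega>|lborel. 1/2 * (v x)\<^sup>2 + 1/2 * c\<^sup>2 * (norm (grad u x))\<^sup>2)"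

definition energy_flux ::
  "(real^'n::finite) measure \<Rightarrow> (real^'n \<Rightarrow> real^'n) \<Rightarrow> real \<Rightarrow> real^'n \<Rightarrow>
   (real^'n \<Rightarrow> real) \<Rightarrow> (real^'n \<Rightarrow> real) \<Rightarrow> (real^'n \<Rightarrow> real) \<Rightarrow> (real^'n \<Rightarrow> real^'n) \<Rightarrow> real" where
  "energy_flux S nrm c w u v vs gs =
     (LINT x|S. - 1/2 * c\<^sup>2 * (norm (grad u x))\<^sup>2 * (w \<bullet> nrm x)
               - 1/2 * (v x)\<^sup>2 * (w \<bullet> nrm x)
               + c\<^sup>2 * (vs x - v x) * (grad u x \<bullet> nrm x)
               - c\<^sup>2 * (grad u x \<bullet> (gs x - grad u x)) * (w \<bullet> nrm x)
               + c\<^sup>2 * v x * (gs x \<bullet> nrm x)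
               - v x * (vs x - v x) * (w \<bullet> nrm x))"

end

theory Submission
  imports Defs
begin

text \<open>
  The element spaces \<open>polys k\<close> are spans of finitely many monomials, and on such a span every
  linear functional is represented, uniquely, by a definite symmetric bilinear form (a
  Gram--Schmidt induction over the spanning family). Equations (1) and (3) together are such a
  representation problem for \<open>\<integral>\<nabla>\<phi>\<cdot>\<nabla>\<psi> + \<integral>\<phi> \<integral>\<psi>\<close>, and (2) one for the \<open>L\<^sup>2\<close> product; this gives unique
  solvability. Finite dimensionality also provides interpolation nodes, so the energy is a quadratic
  polynomial in finitely many point values of \<open>u\<^sup>h\<close> and \<open>v\<^sup>h\<close>; its derivative is
  \<open>\<integral>v\<^sup>h \<partial>\<^sub>tv\<^sup>h + c\<^sup>2\<integral>\<nabla>u\<^sup>h\<cdot>\<nabla>\<partial>\<^sub>tu\<^sup>h\<close>. Testing (1) with \<open>u\<^sup>h\<close> and (2) with \<open>v\<^sup>h\<close>, the terms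
  \<open>c\<^sup>2\<integral>\<nabla>u\<^sup>h\<cdot>\<nabla>v\<^sup>h\<close> cancel, and the transport terms are divergences,
  \<open>v w\<cdot>\<nabla>v = w\<cdot>\<nabla>(v\<^sup>2/2)\<close> and \<open>\<nabla>u\<cdot>\<nabla>(w\<cdot>\<nabla>u) = w\<cdot>\<nabla>(|\<nabla>u|\<^sup>2/2)\<close> (symmetry of second
  derivatives), so the divergence theorem turns everything into the stated boundary integral.
\<close>

section \<open>Riesz representation and interpolation in finite spans\<close>

definition lincomb :: "'i set \<Rightarrow> ('i \<Rightarrow> 'a \<Rightarrow> real) \<Rightarrow> ('a \<Rightarrow> real) set" where
  "lincomb A \<phi> = {f. \<exists>c. f = (\<lambda>x. \<Sum>a\<in>A. c a * \<phi> a x)}"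

definition linear_functional_on :: "('a \<Rightarrow> real) set \<Rightarrow> (('a \<Rightarrow> real) \<Rightarrow> real) \<Rightarrow> bool" where
  "linear_functional_on V F \<longleftrightarrow> (\<forall>f\<in>V. \<forall>g\<in>V. \<forall>r. F (\<lambda>x. r * f x + g x) = r * F f + F g)"

definition symmetric_bilinear_on :: "('a \<Rightarrow> real) set \<Rightarrow> (('a \<Rightarrow> real) \<Rightarrow> ('a \<Rightarrow> real) \<Rightarrow> real) \<Rightarrow> bool" where
  "symmetric_bilinear_on V B \<longleftrightarrow>
     (\<forall>h\<in>V. linear_functional_on V (\<lambda>f. B f h)) \<and> (\<forall>f\<in>V. \<forall>g\<in>V. B f g = B g f)"

definition inner_product_on :: "('a \<Rightarrow> real) set \<Rightarrow> (('a \<Rightarrow> real) \<Rightarrow> ('a \<Rightarrow> real) \<Rightarrow> real) \<Rightarrow> bool" where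
  "inner_product_on V B \<longleftrightarrow>
     symmetric_bilinear_on V B \<and> (\<forall>f\<in>V. 0 \<le> B f f) \<and> (\<forall>f\<in>V. B f f = 0 \<longrightarrow> f = (\<lambda>x. 0))"

lemma lincombI: "f = (\<lambda>x. \<Sum>a\<in>A. c a * \<phi> a x) \<Longrightarrow> f \<in> lincomb A \<phi>"
  unfolding lincomb_def by blast

lemma lincomb_zero: "(\<lambda>x. 0) \<in> lincomb A \<phi>"
  unfolding lincomb_def by (intro CollectI exI[of _ "\<lambda>_. 0"]) simp

lemma lincomb_scale_add:
  assumes "f \<in> lincomb A \<phi>" "g \<in> lincomb A \<phi>"
  shows "(\<lambda>x. r * f x + g x) \<in> lincomb A \<phi>"
proof -
  obtain c d where "f = (\<lambda>x. \<Sum>a\<in>A. c a * \<phi> a x)" "g = (\<lambda>x. \<Sum>a\<in>A. d a * \<phi> a x)"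
    using assms by (auto simp: lincomb_def)
  then have "(\<lambda>x. r * f x + g x) = (\<lambda>x. \<Sum>a\<in>A. (r * c a + d a) * \<phi> a x)"
    by (simp add: sum_distrib_left sum.distrib algebra_simps)
  then show ?thesis
    by (rule lincombI)
qed

lemma lincomb_sum:
  assumes "finite P" "\<And>p. p \<in> P \<Longrightarrow> \<Lambda> p \<in> lincomb A \<phi>"
  shows "(\<lambda>x. \<Sum>p\<in>P. c p * \<Lambda> p x) \<in> lincomb A \<phi>"
  using assms by (induction P rule: finite_induct) (simp_all add: lincomb_zero lincomb_scale_add)

lemma lincomb_generator:
  assumes "finite A" "a \<in> A"
  shows "\<phi> a \<in> lincomb A \<phi>"
proof -
  have "(\<Sum>b\<in>A. (if b = a then 1 else 0) * \<phi> b x) = (\<Sum>b\<in>A. if b = a then \<phi> b x else 0)" for x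
    by (rule sum.cong) auto
  then have "\<phi> a = (\<lambda>x. \<Sum>b\<in>A. (if b = a then 1 else 0) * \<phi> b x)"
    using assms by simp
  then show ?thesis
    by (rule lincombI)
qed

lemma lincomb_mono:
  assumes "finite B" "A \<subseteq> B"
  shows "lincomb A \<phi> \<subseteq> lincomb B \<phi>"
proof
  fix f assume "f \<in> lincomb A \<phi>"
  then obtain c where "f = (\<lambda>x. \<Sum>a\<in>A. c a * \<phi> a x)"
    by (auto simp: lincomb_def)
  also have "\<dots> = (\<lambda>x. \<Sum>a\<in>B. (if a \<in> A then c a else 0) * \<phi> a x)"
    using assms by (intro ext sum.mono_neutral_cong_left) auto
  finally show "f \<in> lincomb B \<phi>"
    by (rule lincombI)
qed

lemma lincomb_insertE:
  assumes "finite A" "a \<notin> A" "f \<in> lincomb (insert a A) \<phi>"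
  obtains s g where "g \<in> lincomb A \<phi>" "f = (\<lambda>x. s * \<phi> a x + g x)"
proof -
  obtain c where "f = (\<lambda>x. \<Sum>b\<in>insert a A. c b * \<phi> b x)"
    using assms(3) by (auto simp: lincomb_def)
  then have "f = (\<lambda>x. c a * \<phi> a x + (\<Sum>b\<in>A. c b * \<phi> b x))"
    using assms by simp
  moreover have "(\<lambda>x. \<Sum>b\<in>A. c b * \<phi> b x) \<in> lincomb A \<phi>"
    unfolding lincomb_def by blast
  ultimately show ?thesis
    using that by blast
qed

lemma linear_functional_on_zero:
  assumes "linear_functional_on V F" "(\<lambda>x. 0) \<in> V"
  shows "F (\<lambda>x. 0) = 0"
  using assms(1)[unfolded linear_functional_on_def, rule_format, OF assms(2) assms(2), of 1] by simp

lemma linear_functional_on_lincomb_sum: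
  assumes "linear_functional_on (lincomb A \<phi>) F" "finite P" "\<And>p. p \<in> P \<Longrightarrow> \<Lambda> p \<in> lincomb A \<phi>"
  shows "F (\<lambda>x. \<Sum>p\<in>P. c p * \<Lambda> p x) = (\<Sum>p\<in>P. c p * F (\<Lambda> p))"
  using assms(2,3)
proof (induction P rule: finite_induct)
  case empty
  then show ?case
    using linear_functional_on_zero[OF assms(1) lincomb_zero] by simp
next
  case (insert p P)
  then have "(\<lambda>x. \<Sum>p\<in>P. c p * \<Lambda> p x) \<in> lincomb A \<phi>"
    by (simp add: lincomb_sum)
  with insert assms(1) show ?case
    by (simp add: linear_functional_on_def)
qed

lemma symmetric_bilinear_on_linear:
  assumes "symmetric_bilinear_on V B" "f \<in> V" "g \<in> V" "h \<in> V"
  shows "B (\<lambda>x. r * f x + g x) h = r * B f h + B g h"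
  using assms unfolding symmetric_bilinear_on_def linear_functional_on_def by blast

lemma symmetric_bilinear_on_commute:
  "symmetric_bilinear_on V B \<Longrightarrow> f \<in> V \<Longrightarrow> g \<in> V \<Longrightarrow> B f g = B g f"
  unfolding symmetric_bilinear_on_def by blast

lemma symmetric_bilinear_on_subset:
  "symmetric_bilinear_on V B \<Longrightarrow> W \<subseteq> V \<Longrightarrow> symmetric_bilinear_on W B"
  unfolding symmetric_bilinear_on_def linear_functional_on_def by blast

lemma inner_product_on_subset:
  "inner_product_on V B \<Longrightarrow> W \<subseteq> V \<Longrightarrow> inner_product_on W B"
  unfolding inner_product_on_def using symmetric_bilinear_on_subset by blast

lemma linear_functional_on_subset:
  "linear_functional_on V F \<Longrightarrow> W \<subseteq> V \<Longrightarrow> linear_functional_on W F"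
  unfolding linear_functional_on_def by blast

lemma inner_product_on_eq_0:
  "inner_product_on V B \<Longrightarrow> f \<in> V \<Longrightarrow> B f f = 0 \<Longrightarrow> f = (\<lambda>x. 0)"
  unfolding inner_product_on_def by blast

lemma lincomb_empty: "lincomb {} \<phi> = {\<lambda>x. 0}"
  by (simp add: lincomb_def)

lemma lincomb_insert_orthogonal:
  assumes "finite A" "a \<notin> A" and B: "symmetric_bilinear_on (lincomb (insert a A) \<phi>) B"
    and y: "y \<in> lincomb A \<phi>" "\<forall>\<psi>\<in>lincomb A \<phi>. B \<psi> y = B \<psi> (\<phi> a)"
    and r_def: "r = (\<lambda>z. (-1) * y z + \<phi> a z)"
  shows "r \<in> lincomb (insert a A) \<phi>" and "\<And>g. g \<in> lincomb A \<phi> \<Longrightarrow> B g r = 0"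
    and "\<And>\<psi>. \<psi> \<in> lincomb (insert a A) \<phi> \<Longrightarrow> \<exists>s. \<exists>g\<in>lincomb A \<phi>. \<psi> = (\<lambda>z. s * r z + g z)"
proof -
  let ?W = "lincomb A \<phi>" and ?V = "lincomb (insert a A) \<phi>"
  have WV: "?W \<subseteq> ?V" and aV: "\<phi> a \<in> ?V"
    using assms(1) by (auto intro: lincomb_generator lincomb_mono[THEN subsetD])
  then have yV: "y \<in> ?V"
    using y(1) by blast
  show rV: "r \<in> ?V"
    unfolding r_def using yV aV by (rule lincomb_scale_add)
  show "B g r = 0" if "g \<in> ?W" for g
  proof -
    have gV: "g \<in> ?V"
      using that WV by blast
    have "B g r = B r g"
      using symmetric_bilinear_on_commute[OF B gV rV] .
    also have "\<dots> = (-1) * B y g + B (\<phi> a) g"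
      unfolding r_def by (rule symmetric_bilinear_on_linear[OF B yV aV gV])
    finally show ?thesis
      using y(2) that symmetric_bilinear_on_commute[OF B gV yV]
        symmetric_bilinear_on_commute[OF B gV aV] by simp
  qed
  show "\<exists>s. \<exists>g\<in>?W. \<psi> = (\<lambda>z. s * r z + g z)" if \<psi>: "\<psi> \<in> ?V" for \<psi>
  proof -
    obtain s g where "g \<in> ?W" "\<psi> = (\<lambda>z. s * \<phi> a z + g z)"
      using lincomb_insertE[OF assms(1,2) \<psi>] .
    moreover have "(\<lambda>z. s * y z + g z) \<in> ?W"
      using y(1) \<open>g \<in> ?W\<close> by (rule lincomb_scale_add)
    ultimately show ?thesis
      unfolding r_def by (intro exI bexI[of _ "\<lambda>z. s * y z + g z"]) (auto simp: algebra_simps)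
  qed
qed

text \<open>The Gram--Schmidt step: a representer \<open>x0\<close> of \<open>F\<close> on \<open>W\<close> is corrected along a
  direction \<open>r\<close> that is orthogonal to \<open>W\<close>.\<close>

lemma representation_extend:
  assumes B: "inner_product_on (lincomb C \<phi>) B" and F: "linear_functional_on (lincomb C \<phi>) F"
    and W: "W \<subseteq> lincomb C \<phi>" and r: "r \<in> lincomb C \<phi>" and x0: "x0 \<in> W"
    and orth: "\<And>g. g \<in> W \<Longrightarrow> B g r = 0" and rep: "\<And>g. g \<in> W \<Longrightarrow> B g x0 = F g"
    and g: "g \<in> W"
  defines "x \<equiv> (\<lambda>z. (F r - B r x0) / B r r * r z + x0 z)"
  shows "B (\<lambda>z. s * r z + g z) x = F (\<lambda>z. s * r z + g z)"
proof -
  let ?V = "lincomb C \<phi>" and ?t = "(F r - B r x0) / B r r"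
  have SB: "symmetric_bilinear_on ?V B"
    using B by (simp add: inner_product_on_def)
  have x0V: "x0 \<in> ?V" and gV: "g \<in> ?V"
    using W x0 g by auto
  have xV: "x \<in> ?V"
    unfolding x_def using r x0V by (rule lincomb_scale_add)
  have lin_x: "B h x = ?t * B h r + B h x0" if "h \<in> ?V" for h
    using symmetric_bilinear_on_linear[OF SB r x0V that]
      symmetric_bilinear_on_commute[OF SB _ that] that r x0V xV
    unfolding x_def by metis
  have Brx: "B r x = F r"
  proof (cases "B r r = 0")
    case True
    then have "r = (\<lambda>z. 0)"
      using inner_product_on_eq_0[OF B r] by blast
    moreover have "B (\<lambda>z. 0) x0 = 0" "F (\<lambda>z. 0) = 0"
      using linear_functional_on_zero[OF F lincomb_zero]
        symmetric_bilinear_on_linear[OF SB lincomb_zero lincomb_zero x0V, of 1] by simp_all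
    ultimately show ?thesis
      using lin_x[OF r] True by simp
  next
    case False
    then show ?thesis
      using lin_x[OF r] symmetric_bilinear_on_commute[OF SB r x0V] by simp
  qed
  have "B g x = F g"
    using lin_x[OF gV] orth[OF g] rep[OF g] by simp
  then show ?thesis
    using symmetric_bilinear_on_linear[OF SB r gV xV] F Brx r gV
    unfolding linear_functional_on_def by simp
qed

lemma lincomb_representation_exists:
  assumes "finite A" "inner_product_on (lincomb A \<phi>) B" "linear_functional_on (lincomb A \<phi>) F"
  shows "\<exists>x\<in>lincomb A \<phi>. \<forall>\<psi>\<in>lincomb A \<phi>. B \<psi> x = F \<psi>"
  using assms
proof (induction A arbitrary: F rule: finite_induct)
  case empty
  have "B (\<lambda>z. 0) (\<lambda>z. 0) = F (\<lambda>z. 0)"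
    using empty.prems linear_functional_on_zero[OF _ lincomb_zero]
    unfolding inner_product_on_def symmetric_bilinear_on_def by (metis lincomb_zero)
  then show ?case
    by (simp add: lincomb_empty)
next
  case (insert a A)
  let ?W = "lincomb A \<phi>" and ?V = "lincomb (insert a A) \<phi>"
  have WV: "?W \<subseteq> ?V" and aV: "\<phi> a \<in> ?V"
    using insert.hyps by (auto intro: lincomb_generator lincomb_mono[THEN subsetD])
  have SB: "symmetric_bilinear_on ?V B"
    using insert.prems(1) by (simp add: inner_product_on_def)
  have BW: "inner_product_on ?W B"
    using inner_product_on_subset[OF insert.prems(1) WV] .
  obtain x0 where x0: "x0 \<in> ?W" "\<forall>\<psi>\<in>?W. B \<psi> x0 = F \<psi>"
    using insert.IH[OF BW linear_functional_on_subset[OF insert.prems(2) WV]] by blast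
  have "linear_functional_on ?W (\<lambda>\<psi>. B \<psi> (\<phi> a))"
    using SB aV WV unfolding symmetric_bilinear_on_def linear_functional_on_def by blast
  then obtain y where y: "y \<in> ?W" "\<forall>\<psi>\<in>?W. B \<psi> y = B \<psi> (\<phi> a)"
    using insert.IH[OF BW] by blast
  define r where "r = (\<lambda>z. (-1) * y z + \<phi> a z)"
  note r = lincomb_insert_orthogonal[OF insert.hyps SB y r_def]
  define x where "x = (\<lambda>z. (F r - B r x0) / B r r * r z + x0 z)"
  have "x \<in> ?V"
    unfolding x_def using WV x0(1) by (intro lincomb_scale_add[OF r(1)] subsetD[OF WV])
  moreover have "B \<psi> x = F \<psi>" if \<psi>: "\<psi> \<in> ?V" for \<psi>
  proof -
    obtain s g where g: "g \<in> ?W" "\<psi> = (\<lambda>z. s * r z + g z)"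
      using r(3)[OF \<psi>] by blast
    show ?thesis
      unfolding g(2) x_def
      by (rule representation_extend[OF insert.prems WV r(1) x0(1) r(2) x0(2)[rule_format] g(1)])
  qed
  ultimately show ?case
    by blast
qed

lemma lincomb_representation_unique:
  assumes B: "inner_product_on (lincomb A \<phi>) B"
    and x: "x \<in> lincomb A \<phi>" and x': "x' \<in> lincomb A \<phi>"
    and eq: "\<And>\<psi>. \<psi> \<in> lincomb A \<phi> \<Longrightarrow> B \<psi> x = B \<psi> x'"
  shows "x = x'"
proof -
  have SB: "symmetric_bilinear_on (lincomb A \<phi>) B"
    using B by (simp add: inner_product_on_def)
  define d where "d = (\<lambda>z. (-1) * x' z + x z)"
  have d: "d \<in> lincomb A \<phi>"
    unfolding d_def using x' x by (rule lincomb_scale_add)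
  have "B d d = (-1) * B x' d + B x d"
    using symmetric_bilinear_on_linear[OF SB x' x d, of "-1"] by (simp only: d_def)
  also have "\<dots> = (-1) * B d x' + B d x"
    using symmetric_bilinear_on_commute[OF SB d] x x' by simp
  finally have "d = (\<lambda>z. 0)"
    using eq[OF d] inner_product_on_eq_0[OF B d] by simp
  then show ?thesis
    unfolding d_def by (simp add: fun_eq_iff)
qed

theorem lincomb_riesz_representation:
  assumes "finite A" "inner_product_on (lincomb A \<phi>) B" "linear_functional_on (lincomb A \<phi>) F"
  shows "\<exists>!x. x \<in> lincomb A \<phi> \<and> (\<forall>\<psi>\<in>lincomb A \<phi>. B \<psi> x = F \<psi>)"
  using lincomb_representation_exists[OF assms] lincomb_representation_unique[OF assms(2)]
  by (metis (no_types, lifting))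

definition unisolvent :: "('a \<Rightarrow> real) set \<Rightarrow> 'a set \<Rightarrow> bool" where
  "unisolvent V P \<longleftrightarrow> (\<forall>f\<in>V. (\<forall>p\<in>P. f p = 0) \<longrightarrow> f = (\<lambda>x. 0))"

lemma unisolvent_insert:
  assumes "finite A" "a \<notin> A" and P: "unisolvent (lincomb A \<phi>) P"
  obtains x0 where "unisolvent (lincomb (insert a A) \<phi>) (insert x0 P)"
proof (cases "\<exists>r\<in>lincomb (insert a A) \<phi>. (\<forall>p\<in>P. r p = 0) \<and> r \<noteq> (\<lambda>x. 0)")
  case False
  then show ?thesis
    using that by (fastforce simp: unisolvent_def)
next
  case True
  let ?W = "lincomb A \<phi>" and ?V = "lincomb (insert a A) \<phi>"
  obtain r x0 where r: "r \<in> ?V" "\<forall>p\<in>P. r p = 0" "r x0 \<noteq> 0"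
    using True by (auto simp: fun_eq_iff)
  obtain s' g' where g': "g' \<in> ?W" "r = (\<lambda>x. s' * \<phi> a x + g' x)"
    using lincomb_insertE[OF assms(1,2) r(1)] .
  have "s' \<noteq> 0"
    using P g' r unfolding unisolvent_def by auto
  have "f = (\<lambda>x. 0)" if f: "f \<in> ?V" "\<forall>p\<in>insert x0 P. f p = 0" for f
  proof -
    obtain s g where g: "g \<in> ?W" "f = (\<lambda>x. s * \<phi> a x + g x)"
      using lincomb_insertE[OF assms(1,2) f(1)] .
    define h where "h = (\<lambda>x. (- s / s') * g' x + g x)"
    have h: "h x = f x - s / s' * r x" for x
      unfolding h_def g(2) g'(2) using \<open>s' \<noteq> 0\<close> by (simp add: field_simps)
    have "h \<in> ?W"
      unfolding h_def using g'(1) g(1) by (rule lincomb_scale_add)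
    then have "h = (\<lambda>x. 0)"
      using P f(2) r(2) unfolding unisolvent_def by (simp add: h)
    then have "f x = s / s' * r x" for x
      using h[of x] by simp
    with f(2) r(3) show ?thesis
      by (auto simp: fun_eq_iff)
  qed
  then show ?thesis
    using that unfolding unisolvent_def by blast
qed

lemma lincomb_unisolvent_nodes:
  assumes "finite A"
  obtains P where "finite P" "unisolvent (lincomb A \<phi>) P"
proof -
  have "\<exists>P. finite P \<and> unisolvent (lincomb A \<phi>) P"
    using assms
  proof (induction A rule: finite_induct)
    case empty
    show ?case
      by (intro exI[of _ "{}"]) (simp add: lincomb_empty unisolvent_def)
  next
    case (insert a A)
    then obtain P where "finite P" "unisolvent (lincomb A \<phi>) P"
      by blast
    then show ?case
      using unisolvent_insert[OF insert.hyps] by (metis finite_insert)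
  qed
  with that show ?thesis
    by blast
qed

lemma inner_product_on_nodes:
  assumes "finite P" "unisolvent V P"
  shows "inner_product_on V (\<lambda>f g. \<Sum>p\<in>P. f p * g p)"
proof -
  have "(\<Sum>p\<in>P. f p * f p) = 0 \<Longrightarrow> f p = 0" if "p \<in> P" for f :: "'a \<Rightarrow> real" and p
    using assms(1) that by (simp add: sum_nonneg_eq_0_iff)
  with assms(2) show ?thesis
    unfolding inner_product_on_def symmetric_bilinear_on_def linear_functional_on_def unisolvent_def
    by (simp add: sum.distrib sum_distrib_left algebra_simps sum_nonneg)
qed

text \<open>The interpolation basis consists of the representers of the point evaluations with
  respect to the discrete inner product on a unisolvent set of nodes.\<close>

lemma lincomb_interpolation:
  assumes "finite A"
  obtains P \<Lambda> where "finite P" "\<And>p. \<Lambda> p \<in> lincomb A \<phi>"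
    "\<And>f x. f \<in> lincomb A \<phi> \<Longrightarrow> f x = (\<Sum>p\<in>P. f p * \<Lambda> p x)"
proof -
  let ?V = "lincomb A \<phi>"
  obtain P where P: "finite P" "unisolvent ?V P"
    using lincomb_unisolvent_nodes[OF assms] by blast
  define B where "B = (\<lambda>f g :: _ \<Rightarrow> real. \<Sum>p\<in>P. f p * g p)"
  have ip: "inner_product_on ?V B"
    unfolding B_def using P by (rule inner_product_on_nodes)
  have "\<exists>k\<in>?V. \<forall>\<psi>\<in>?V. B \<psi> k = \<psi> q" for q
    using lincomb_representation_exists[OF assms ip, of "\<lambda>\<psi>. \<psi> q"]
    by (simp add: linear_functional_on_def)
  then obtain \<Lambda> where \<Lambda>: "\<And>q. \<Lambda> q \<in> ?V" "\<And>q \<psi>. \<psi> \<in> ?V \<Longrightarrow> B \<psi> (\<Lambda> q) = \<psi> q"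
    by metis
  have "f x = (\<Sum>q\<in>P. f q * \<Lambda> q x)" if f: "f \<in> ?V" for f x
  proof -
    let ?g = "\<lambda>x. \<Sum>q\<in>P. f q * \<Lambda> q x"
    have g: "?g \<in> ?V"
      using P(1) \<Lambda>(1) by (rule lincomb_sum)
    have "B \<psi> ?g = B \<psi> f" if "\<psi> \<in> ?V" for \<psi>
    proof -
      have "B \<psi> ?g = (\<Sum>p\<in>P. \<Sum>q\<in>P. f q * (\<psi> p * \<Lambda> q p))"
        unfolding B_def by (simp add: sum_distrib_left mult.left_commute)
      also have "\<dots> = (\<Sum>q\<in>P. f q * B \<psi> (\<Lambda> q))"
        unfolding B_def by (subst sum.swap) (simp add: sum_distrib_left)
      also have "\<dots> = B \<psi> f"
        using \<Lambda>(2)[OF that] by (simp add: B_def mult.commute)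
      finally show ?thesis .
    qed
    then have "?g = f"
      using lincomb_representation_unique[OF ip g f] by blast
    then show ?thesis
      by (simp add: fun_eq_iff)
  qed
  with P(1) \<Lambda>(1) that show ?thesis
    by blast
qed

lemma symmetric_bilinear_on_interpolation:
  assumes B: "symmetric_bilinear_on (lincomb A \<phi>) B"
    and P: "finite P" "\<And>p. \<Lambda> p \<in> lincomb A \<phi>"
    and interp: "\<And>f x. f \<in> lincomb A \<phi> \<Longrightarrow> f x = (\<Sum>p\<in>P. f p * \<Lambda> p x)"
    and g: "g \<in> lincomb A \<phi>" and h: "h \<in> lincomb A \<phi>"
  shows "B g h = (\<Sum>p\<in>P. \<Sum>q\<in>P. g p * h q * B (\<Lambda> p) (\<Lambda> q))"
proof -
  have expand: "B (\<lambda>x. \<Sum>p\<in>P. c p * \<Lambda> p x) k = (\<Sum>p\<in>P. c p * B (\<Lambda> p) k)"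
    if "k \<in> lincomb A \<phi>" for c k
    using B that P unfolding symmetric_bilinear_on_def by (intro linear_functional_on_lincomb_sum) auto
  have "B g h = B (\<lambda>x. \<Sum>p\<in>P. g p * \<Lambda> p x) h"
    by (rule arg_cong[where f="\<lambda>k. B k h"]) (rule ext, rule interp[OF g])
  also have "\<dots> = (\<Sum>p\<in>P. g p * B h (\<Lambda> p))"
    using symmetric_bilinear_on_commute[OF B P(2) h] by (simp add: expand[OF h])
  also have "\<dots> = (\<Sum>p\<in>P. g p * B (\<lambda>x. \<Sum>q\<in>P. h q * \<Lambda> q x) (\<Lambda> p))"
    by (rule sum.cong[OF refl], rule arg_cong[where f="\<lambda>k. g _ * B k _"]) (rule ext, rule interp[OF h])
  also have "\<dots> = (\<Sum>p\<in>P. g p * (\<Sum>q\<in>P. h q * B (\<Lambda> p) (\<Lambda> q)))"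
    using symmetric_bilinear_on_commute[OF B P(2) P(2)] by (simp add: expand[OF P(2)])
  finally show ?thesis
    by (simp add: sum_distrib_left algebra_simps)
qed

text \<open>By interpolation, a quadratic form on a finite span is a polynomial in finitely many point
  values of its argument.\<close>

theorem lincomb_quadratic_form_has_real_derivative:
  assumes A: "finite A" and B: "symmetric_bilinear_on (lincomb A \<phi>) B" and T: "open T" "t \<in> T"
    and f: "\<And>\<tau>. \<tau> \<in> T \<Longrightarrow> f \<tau> \<in> lincomb A \<phi>" and f': "f' \<in> lincomb A \<phi>"
    and deriv: "\<And>x. ((\<lambda>\<tau>. f \<tau> x) has_real_derivative f' x) (at t)"
  shows "((\<lambda>\<tau>. B (f \<tau>) (f \<tau>)) has_real_derivative 2 * B (f t) f') (at t)"
proof -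
  obtain P \<Lambda> where P: "finite P" "\<And>p. \<Lambda> p \<in> lincomb A \<phi>"
    and interp: "\<And>g x. g \<in> lincomb A \<phi> \<Longrightarrow> g x = (\<Sum>p\<in>P. g p * \<Lambda> p x)"
    using lincomb_interpolation[OF A] by blast
  have quadratic: "B g h = (\<Sum>p\<in>P. \<Sum>q\<in>P. g p * h q * B (\<Lambda> p) (\<Lambda> q))"
    if "g \<in> lincomb A \<phi>" "h \<in> lincomb A \<phi>" for g h
    using B P interp that by (rule symmetric_bilinear_on_interpolation)
  have "((\<lambda>\<tau>. \<Sum>p\<in>P. \<Sum>q\<in>P. f \<tau> p * f \<tau> q * B (\<Lambda> p) (\<Lambda> q)) has_real_derivative
      (\<Sum>p\<in>P. \<Sum>q\<in>P. (f' p * f t q + f' q * f t p) * B (\<Lambda> p) (\<Lambda> q))) (at t)"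
    by (intro DERIV_sum DERIV_cmult_right DERIV_mult deriv)
  also have "(\<Sum>p\<in>P. \<Sum>q\<in>P. (f' p * f t q + f' q * f t p) * B (\<Lambda> p) (\<Lambda> q))
      = B f' (f t) + B (f t) f'"
    using quadratic[OF f' f[OF T(2)]] quadratic[OF f[OF T(2)] f']
    by (simp add: sum.distrib algebra_simps)
  also have "\<dots> = 2 * B (f t) f'"
    using symmetric_bilinear_on_commute[OF B f' f[OF T(2)]] by simp
  finally show ?thesis
    by (rule has_field_derivative_transform_within_open[OF _ T]) (simp add: quadratic[OF f f])
qed

section \<open>Gradients and polynomial functions\<close>

lemma grad_eqI:
  fixes f :: "real^'n::finite \<Rightarrow> real"
  assumes "(f has_derivative (\<lambda>h. a \<bullet> h)) (at x)"
  shows "grad f x = a"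
  using frechet_derivative_at[OF assms, symmetric] by (simp add: grad_def inner_axis vec_eq_iff)

lemma linear_eq_inner_axis:
  fixes L :: "real^'n::finite \<Rightarrow> real"
  assumes "linear L"
  shows "L h = (\<chi> i. L (axis i 1)) \<bullet> h"
proof -
  interpret linear L by fact
  have "L h = L (\<Sum>i\<in>UNIV. h $ i *\<^sub>R axis i 1)"
    using basis_expansion[of h] by (simp add: scalar_mult_eq_scaleR)
  then show ?thesis
    by (simp add: sum scale inner_vec_def mult.commute)
qed

lemma has_derivative_grad:
  fixes f :: "real^'n::finite \<Rightarrow> real"
  assumes "f differentiable (at x)"
  shows "(f has_derivative (\<lambda>h. grad f x \<bullet> h)) (at x)"
proof -
  have L: "(f has_derivative frechet_derivative f (at x)) (at x)"
    using assms by (rule frechet_derivative_works[THEN iffD1])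
  moreover have "frechet_derivative f (at x) = (\<lambda>h. grad f x \<bullet> h)"
    unfolding grad_def by (rule ext) (rule linear_eq_inner_axis[OF has_derivative_linear[OF L]])
  ultimately show ?thesis
    by simp
qed

lemma grad_const [simp]: "grad (\<lambda>x. a) x = 0"
  by (rule grad_eqI) simp

lemma grad_bounded_linear:
  assumes "bounded_linear f"
  shows "grad f x = (\<chi> i. f (axis i 1))"
  using frechet_derivative_at[OF bounded_linear_imp_has_derivative[OF assms]] by (simp add: grad_def)

lemma grad_add:
  assumes "f differentiable (at x)" "g differentiable (at x)"
  shows "grad (\<lambda>x. f x + g x) x = grad f x + grad g x"
  by (rule grad_eqI)
    (use has_derivative_add[OF assms[THEN has_derivative_grad]] in \<open>simp add: inner_add_left\<close>)

lemma grad_diff: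
  assumes "f differentiable (at x)" "g differentiable (at x)"
  shows "grad (\<lambda>x. f x - g x) x = grad f x - grad g x"
  by (rule grad_eqI)
    (use has_derivative_diff[OF assms[THEN has_derivative_grad]] in \<open>simp add: inner_diff_left\<close>)

lemma grad_mult:
  assumes "f differentiable (at x)" "g differentiable (at x)"
  shows "grad (\<lambda>x. f x * g x) x = f x *\<^sub>R grad g x + g x *\<^sub>R grad f x"
  by (rule grad_eqI)
    (use has_derivative_mult[OF assms[THEN has_derivative_grad]] in \<open>simp add: inner_add_left algebra_simps\<close>)

lemma grad_cmult:
  assumes "f differentiable (at x)"
  shows "grad (\<lambda>x. a * f x) x = a *\<^sub>R grad f x"
  using grad_mult[OF _ assms, of "\<lambda>_. a"] by simp

lemma grad_lincomb:
  assumes "f differentiable (at x)" "g differentiable (at x)"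
  shows "grad (\<lambda>x. r * f x + g x) x = r *\<^sub>R grad f x + grad g x"
  using assms by (simp add: grad_add grad_cmult)

lemma grad_sum:
  assumes "finite A" "\<And>a. a \<in> A \<Longrightarrow> f a differentiable (at x)"
  shows "grad (\<lambda>x. \<Sum>a\<in>A. f a x) x = (\<Sum>a\<in>A. grad (f a) x)"
  using assms by (induction A rule: finite_induct) (simp_all add: grad_add)

lemma real_polynomial_function_cmult:
  "real_polynomial_function f \<Longrightarrow> real_polynomial_function (\<lambda>x. c * f x)"
  by (intro real_polynomial_function.intros(2,4))

lemma real_polynomial_function_grad:
  "real_polynomial_function f \<Longrightarrow> real_polynomial_function (\<lambda>x. grad f x $ i)"
proof (induction rule: real_polynomial_function.induct)
  case (mult f g)
  then show ?case
    by (auto simp: grad_mult differentiable_at_real_polynomial_function)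
qed (auto simp: grad_bounded_linear grad_add differentiable_at_real_polynomial_function)

lemma grad_grad_commute:
  "real_polynomial_function f \<Longrightarrow> grad (\<lambda>x. grad f x $ i) x $ j = grad (\<lambda>x. grad f x $ j) x $ i"
proof (induction arbitrary: x rule: real_polynomial_function.induct)
  case (add f g)
  have "grad (\<lambda>x. grad (\<lambda>x. f x + g x) x $ k) x $ l
      = grad (\<lambda>x. grad f x $ k) x $ l + grad (\<lambda>x. grad g x $ k) x $ l" for k l
    using add.hyps
    by (simp add: grad_add differentiable_at_real_polynomial_function real_polynomial_function_grad)
  with add.IH show ?case
    by simp
next
  case (mult f g)
  have "grad (\<lambda>x. grad (\<lambda>x. f x * g x) x $ k) x $ l
      = f x * grad (\<lambda>x. grad g x $ k) x $ l + grad g x $ k * grad f x $ l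
        + g x * grad (\<lambda>x. grad f x $ k) x $ l + grad f x $ k * grad g x $ l" for k l
    using mult.hyps
    by (simp add: grad_add grad_mult differentiable_at_real_polynomial_function
        real_polynomial_function_grad real_polynomial_function.intros)
  with mult.IH show ?case
    by simp
qed (simp_all add: grad_bounded_linear)

lemma real_polynomial_function_inner_grad:
  assumes "real_polynomial_function f" "real_polynomial_function g"
  shows "real_polynomial_function (\<lambda>x. grad f x \<bullet> grad g x)"
  unfolding inner_vec_def inner_real_def using assms
  by (intro real_polynomial_function_sum real_polynomial_function.intros(4) real_polynomial_function_grad)
    simp_all

lemma real_polynomial_function_directional_grad:
  "real_polynomial_function f \<Longrightarrow> real_polynomial_function (\<lambda>x. w \<bullet> grad f x)"
  unfolding inner_vec_def inner_real_def
  by (intro real_polynomial_function_sum real_polynomial_function_cmult real_polynomial_function_grad)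
    simp_all

lemma real_polynomial_function_zero_on_open:
  fixes f :: "real^'n::finite \<Rightarrow> real"
  assumes f: "real_polynomial_function f" and U: "open U" "x0 \<in> U" "\<And>x. x \<in> U \<Longrightarrow> f x = 0"
  shows "f y = 0"
proof -
  define line where "line = (\<lambda>s::real. x0 + s *\<^sub>R (y - x0))"
  have "polynomial_function line"
    unfolding line_def
    by (intro polynomial_function_add[OF polynomial_function_const]
        polynomial_function_mult[OF polynomial_function_id polynomial_function_const])
  then have "real_polynomial_function (f \<circ> line)"
    using f by (rule real_polynomial_function_compose)
  then obtain a n where "f \<circ> line = (\<lambda>s. \<Sum>i\<le>n. a i * s ^ i)"
    using real_polynomial_function_imp_sum by blast
  then have an: "f (line s) = (\<Sum>i\<le>n. a i * s ^ i)" for s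
    by (simp add: fun_eq_iff)
  have "open (line -` U)"
    unfolding line_def by (intro open_vimage U continuous_intros)
  moreover have "0 \<in> line -` U"
    using U by (simp add: line_def)
  ultimately obtain e where "e > 0" "ball 0 e \<subseteq> line -` U"
    by (meson open_contains_ball)
  then have "{-e<..<e} \<subseteq> {s. (\<Sum>i\<le>n. a i * s ^ i) = 0}"
    using U(3) by (force simp: an[symmetric] dist_real_def)
  moreover have "infinite {-e<..<e}"
    using \<open>e > 0\<close> by simp
  ultimately have "infinite {s. (\<Sum>i\<le>n. a i * s ^ i) = 0}"
    using finite_subset by blast
  then have "\<forall>i\<le>n. a i = 0"
    using polyfun_finite_roots by blast
  then show ?thesis
    using an[of 1] by (simp add: line_def)
qed

lemma grad_eq_0_imp_constant:
  fixes f :: "real^'n::finite \<Rightarrow> real"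
  assumes "real_polynomial_function f" "\<And>x. grad f x = 0"
  shows "f x = f y"
proof -
  have "(f has_derivative (\<lambda>h. 0)) (at z within UNIV)" for z
    using has_derivative_grad[OF differentiable_at_real_polynomial_function[OF assms(1)]] assms(2)
    by simp
  then show ?thesis
    using has_derivative_zero_constant[of UNIV f] by fastforce
qed

lemma directional_grad_square:
  assumes "real_polynomial_function f"
  shows "w \<bullet> grad (\<lambda>x. f x * f x) x = 2 * f x * (w \<bullet> grad f x)"
proof -
  have d: "f differentiable (at x)"
    using assms by (rule differentiable_at_real_polynomial_function)
  show ?thesis
    unfolding grad_mult[OF d d] inner_add_right inner_scaleR_right by simp
qed

lemma directional_grad_grad_square:
  assumes f: "real_polynomial_function f"
  shows "w \<bullet> grad (\<lambda>x. grad f x \<bullet> grad f x) x = 2 * (grad f x \<bullet> grad (\<lambda>y. w \<bullet> grad f y) x)"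
proof -
  let ?D = "\<lambda>i j. grad (\<lambda>y. grad f y $ i) x $ j"
  have diff: "(\<lambda>y. grad f y $ i) differentiable (at x)" for i
    using f by (intro differentiable_at_real_polynomial_function real_polynomial_function_grad)
  have "grad (\<lambda>x. grad f x \<bullet> grad f x) x = (\<Sum>i\<in>UNIV. (2 * grad f x $ i) *\<^sub>R grad (\<lambda>y. grad f y $ i) x)"
    unfolding inner_vec_def inner_real_def using diff
    by (simp add: grad_sum grad_mult differentiable_mult scaleR_add_left[symmetric])
  then have "w \<bullet> grad (\<lambda>x. grad f x \<bullet> grad f x) x = (\<Sum>j\<in>UNIV. \<Sum>i\<in>UNIV. 2 * grad f x $ i * w $ j * ?D i j)"
    by (simp add: inner_sum_right inner_vec_def sum_distrib_left algebra_simps)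
  also have "\<dots> = (\<Sum>j\<in>UNIV. \<Sum>i\<in>UNIV. 2 * grad f x $ i * w $ j * ?D j i)"
    using grad_grad_commute[OF f] by simp
  also have "\<dots> = 2 * (grad f x \<bullet> grad (\<lambda>y. w \<bullet> grad f y) x)"
    unfolding inner_vec_def[of w] inner_real_def using diff
    by (simp add: grad_sum grad_cmult inner_sum_right inner_vec_def sum_distrib_left algebra_simps)
      (rule sum.swap)
  finally show ?thesis .
qed

section \<open>The polynomial spaces \<open>polys k\<close>\<close>

lemma finite_multi_idx: "finite (multi_idx k :: ('n::finite \<Rightarrow> nat) set)"
proof (rule finite_subset)
  show "multi_idx k \<subseteq> Pi\<^sub>E (UNIV::'n set) (\<lambda>_. {..k})"
  proof
    fix \<alpha> :: "'n \<Rightarrow> nat"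
    assume "\<alpha> \<in> multi_idx k"
    then have "\<alpha> i \<le> k" for i
      using member_le_sum[of i UNIV \<alpha>] by (simp add: multi_idx_def)
    then show "\<alpha> \<in> Pi\<^sub>E UNIV (\<lambda>_. {..k})"
      by (simp add: PiE_UNIV_domain)
  qed
qed (simp add: finite_PiE)

lemma polys_eq_lincomb: "polys q = lincomb (multi_idx q) monomial_fn"
  by (simp add: polys_def lincomb_def)

lemma real_polynomial_function_polys: "f \<in> polys k \<Longrightarrow> real_polynomial_function f"
  unfolding polys_def monomial_fn_def using finite_multi_idx
  by (auto intro!: real_polynomial_function_sum real_polynomial_function_cmult
      real_polynomial_function_prod real_polynomial_function_power)

lemma polys_mono: "k \<le> l \<Longrightarrow> polys k \<subseteq> polys l"
  unfolding polys_eq_lincomb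
  by (intro lincomb_mono finite_multi_idx) (auto simp: multi_idx_def)

lemma const_in_polys: "(\<lambda>x. a) \<in> polys k"
proof -
  have "monomial_fn (\<lambda>_. 0) \<in> polys k"
    unfolding polys_eq_lincomb by (intro lincomb_generator finite_multi_idx) (simp add: multi_idx_def)
  then have "(\<lambda>x. a * monomial_fn (\<lambda>_. 0) x + 0) \<in> polys k"
    unfolding polys_eq_lincomb by (rule lincomb_scale_add[OF _ lincomb_zero])
  then show ?thesis
    by (simp add: monomial_fn_def)
qed

lemma polys_add: "f \<in> polys k \<Longrightarrow> g \<in> polys k \<Longrightarrow> (\<lambda>x. f x + g x) \<in> polys k"
  using lincomb_scale_add[of f _ _ g 1] by (simp add: polys_eq_lincomb)

lemma monomial_fn_in_polys: "sum \<alpha> UNIV \<le> k \<Longrightarrow> monomial_fn \<alpha> \<in> polys k"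
  unfolding polys_eq_lincomb by (intro lincomb_generator finite_multi_idx) (simp add: multi_idx_def)

lemma bounded_linear_in_polys:
  fixes f :: "real^'n::finite \<Rightarrow> real"
  assumes "bounded_linear f"
  shows "f \<in> polys 1"
proof -
  define e where "e i = (\<lambda>j. if j = i then 1 else 0 :: nat)" for i :: 'n
  have "monomial_fn (e i) x = (\<Prod>j\<in>UNIV. if j = i then x $ j else 1)" for i x
    unfolding monomial_fn_def e_def by (rule prod.cong) auto
  then have e: "monomial_fn (e i) = (\<lambda>x. x $ i)" for i
    by (simp add: fun_eq_iff)
  have "(\<lambda>x. \<Sum>i\<in>UNIV. f (axis i 1) * monomial_fn (e i) x) \<in> polys 1"
    unfolding polys_eq_lincomb
    by (intro lincomb_sum monomial_fn_in_polys[unfolded polys_eq_lincomb]) (simp_all add: e_def)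
  moreover have "f = (\<lambda>x. \<Sum>i\<in>UNIV. f (axis i 1) * monomial_fn (e i) x)"
    unfolding e
  proof
    fix x
    have "f x = (\<chi> i. f (axis i 1)) \<bullet> x"
      by (rule linear_eq_inner_axis[OF bounded_linear.linear[OF assms]])
    then show "f x = (\<Sum>i\<in>UNIV. f (axis i 1) * x $ i)"
      by (simp add: inner_vec_def)
  qed
  ultimately show ?thesis
    by simp
qed

lemma polys_mult:
  assumes "f \<in> polys a" "g \<in> polys b"
  shows "(\<lambda>x. f x * g x) \<in> polys (a + b)"
proof -
  obtain c d where f: "f = (\<lambda>x. \<Sum>\<alpha>\<in>multi_idx a. c \<alpha> * monomial_fn \<alpha> x)"
    and g: "g = (\<lambda>x. \<Sum>\<beta>\<in>multi_idx b. d \<beta> * monomial_fn \<beta> x)"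
    using assms by (auto simp: polys_def)
  let ?I = "multi_idx a \<times> multi_idx b" and ?m = "\<lambda>p. monomial_fn (\<lambda>i. fst p i + snd p i)"
  have "f x * g x = (\<Sum>p\<in>?I. c (fst p) * d (snd p) * ?m p x)" for x
    unfolding f g sum_product sum.cartesian_product
    by (rule sum.cong) (auto simp: monomial_fn_def power_add prod.distrib)
  moreover have "(\<lambda>x. \<Sum>p\<in>?I. c (fst p) * d (snd p) * ?m p x) \<in> polys (a + b)"
    unfolding polys_eq_lincomb
    by (intro lincomb_sum monomial_fn_in_polys[unfolded polys_eq_lincomb])
      (simp_all add: finite_multi_idx, auto simp: multi_idx_def sum.distrib intro: add_mono)
  ultimately show ?thesis
    by (simp add: fun_eq_iff[symmetric])
qed

lemma real_polynomial_function_in_polys: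
  "real_polynomial_function f \<Longrightarrow> \<exists>k. f \<in> polys k"
proof (induction rule: real_polynomial_function.induct)
  case (linear f)
  then show ?case
    using bounded_linear_in_polys by blast
next
  case (const c)
  then show ?case
    using const_in_polys by blast
next
  case (add f g)
  then obtain k l where "f \<in> polys k" "g \<in> polys l"
    by blast
  then have "f \<in> polys (max k l)" "g \<in> polys (max k l)"
    using polys_mono[of k "max k l"] polys_mono[of l "max k l"] by auto
  then show ?case
    using polys_add by blast
next
  case (mult f g)
  then show ?case
    using polys_mult by blast
qed

section \<open>Integrals\<close>

lemma set_integral_sum:
  fixes f :: "'i \<Rightarrow> 'a \<Rightarrow> real"
  assumes "\<And>i. i \<in> I \<Longrightarrow> set_integrable M A (f i)"
  shows "(LINT x:A|M. \<Sum>i\<in>I. f i x) = (\<Sum>i\<in>I. LINT x:A|M. f i x)"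
  unfolding set_lebesgue_integral_def scaleR_sum_right
  by (rule Bochner_Integration.integral_sum) (use assms in \<open>simp add: set_integrable_def\<close>)

lemma linear_functional_on_integral:
  assumes "\<And>\<phi>. \<phi> \<in> V \<Longrightarrow> integrable M (L \<phi>)"
    and "\<And>f g r x. f \<in> V \<Longrightarrow> g \<in> V \<Longrightarrow> L (\<lambda>x. r * f x + g x) x = r * L f x + L g x"
  shows "linear_functional_on V (\<lambda>\<phi>. integral\<^sup>L M (L \<phi>))"
  unfolding linear_functional_on_def
proof (intro ballI allI)
  fix f g r assume fg: "f \<in> V" "g \<in> V"
  have "L (\<lambda>x. r * f x + g x) = (\<lambda>x. r * L f x + L g x)"
    by (rule ext) (rule assms(2)[OF fg])
  then show "integral\<^sup>L M (L (\<lambda>x. r * f x + g x)) = r * integral\<^sup>L M (L f) + integral\<^sup>L M (L g)"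
    by (simp add: Bochner_Integration.integral_add assms(1) fg)
qed

lemma linear_functional_on_set_integral:
  assumes "\<And>\<phi>. \<phi> \<in> V \<Longrightarrow> set_integrable M A (L \<phi>)"
    and "\<And>f g r x. f \<in> V \<Longrightarrow> g \<in> V \<Longrightarrow> L (\<lambda>x. r * f x + g x) x = r * L f x + L g x"
  shows "linear_functional_on V (\<lambda>\<phi>. LINT x:A|M. L \<phi> x)"
  unfolding linear_functional_on_def
proof (intro ballI allI)
  fix f g r assume fg: "f \<in> V" "g \<in> V"
  have "L (\<lambda>x. r * f x + g x) = (\<lambda>x. r * L f x + L g x)"
    by (rule ext) (rule assms(2)[OF fg])
  then show "(LINT x:A|M. L (\<lambda>x. r * f x + g x) x) = r * (LINT x:A|M. L f x) + (LINT x:A|M. L g x)"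
    by (simp add: assms(1) fg)
qed

definition ess_bounded :: "'a measure \<Rightarrow> ('a \<Rightarrow> real) \<Rightarrow> bool" where
  "ess_bounded M f \<longleftrightarrow> f \<in> borel_measurable M \<and> (\<exists>B. AE x in M. \<bar>f x\<bar> \<le> B)"

lemma ess_bounded_const [simp]: "ess_bounded M (\<lambda>x. c)"
  by (auto simp: ess_bounded_def)

lemma ess_bounded_add:
  assumes "ess_bounded M f" "ess_bounded M g"
  shows "ess_bounded M (\<lambda>x. f x + g x)"
proof -
  obtain B C where "AE x in M. \<bar>f x\<bar> \<le> B" "AE x in M. \<bar>g x\<bar> \<le> C"
    using assms by (auto simp: ess_bounded_def)
  then have "AE x in M. \<bar>f x + g x\<bar> \<le> B + C"
    by eventually_elim linarith
  with assms show ?thesis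
    by (auto simp: ess_bounded_def)
qed

lemma ess_bounded_mult:
  assumes "ess_bounded M f" "ess_bounded M g"
  shows "ess_bounded M (\<lambda>x. f x * g x)"
proof -
  obtain B C where "AE x in M. \<bar>f x\<bar> \<le> B" "AE x in M. \<bar>g x\<bar> \<le> C"
    using assms by (auto simp: ess_bounded_def)
  then have "AE x in M. \<bar>f x * g x\<bar> \<le> B * C"
    by eventually_elim (simp add: abs_mult mult_mono')
  with assms show ?thesis
    by (auto simp: ess_bounded_def)
qed

lemma ess_bounded_diff:
  "ess_bounded M f \<Longrightarrow> ess_bounded M g \<Longrightarrow> ess_bounded M (\<lambda>x. f x - g x)"
  using ess_bounded_add[of M f "\<lambda>x. -1 * g x"] ess_bounded_mult[of M "\<lambda>x. -1" g] by simp

lemma ess_bounded_inner: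
  fixes a b :: "'a \<Rightarrow> real^'n::finite"
  assumes "\<And>i. ess_bounded M (\<lambda>x. a x $ i)" "\<And>i. ess_bounded M (\<lambda>x. b x $ i)"
  shows "ess_bounded M (\<lambda>x. a x \<bullet> b x)"
proof -
  have "ess_bounded M (\<lambda>x. \<Sum>i\<in>I. a x $ i * b x $ i)" if "finite I" for I
    using that by (induction I rule: finite_induct) (simp_all add: assms ess_bounded_add ess_bounded_mult)
  then show ?thesis
    by (simp add: inner_vec_def)
qed

lemma integrable_ess_bounded:
  assumes "finite_measure M" "ess_bounded M f"
  shows "integrable M f"
proof -
  obtain B where "AE x in M. norm (f x) \<le> B" "f \<in> borel_measurable M"
    using assms(2) by (auto simp: ess_bounded_def)
  then show ?thesis
    by (rule finite_measure.integrable_const_bound[OF assms(1)])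
qed

lemma ex1_prod: "\<exists>!x. P x \<Longrightarrow> \<exists>!y. Q y \<Longrightarrow> \<exists>!p. P (fst p) \<and> Q (snd p)"
  by (metis fst_conv snd_conv prod.collapse)

section \<open>A single element\<close>

locale element =
  fixes \<Omega> :: "(real^'n::finite) set" and S :: "(real^'n) measure" and nrm :: "real^'n \<Rightarrow> real^'n"
  assumes element: "dg_element \<Omega> S nrm"
begin

lemma open_domain: "open \<Omega>" and bounded_domain: "bounded \<Omega>" and domain_nonempty: "\<Omega> \<noteq> {}"
  and sets_boundary_measure: "sets S = sets lborel"
  and AE_frontier: "AE x in S. x \<in> frontier \<Omega>"
  and nrm_measurable: "nrm \<in> borel_measurable S" and AE_norm_nrm: "AE x in S. norm (nrm x) = 1"
  using element by (simp_all add: dg_element_def)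

lemma finite_measure_boundary: "finite_measure S"
  using element by (intro finite_measureI) (auto simp: dg_element_def)

lemma borel_measurable_boundary: "borel_measurable S = borel_measurable borel"
proof -
  have "borel_measurable S = borel_measurable lborel"
    by (rule measurable_cong_sets) (simp_all add: sets_boundary_measure)
  then show ?thesis
    by (simp add: measurable_lborel2)
qed

lemma set_integrable_polynomial:
  "real_polynomial_function f \<Longrightarrow> set_integrable lborel \<Omega> f"
proof -
  assume f: "real_polynomial_function f"
  have "set_integrable lborel (closure \<Omega>) f"
    unfolding set_integrable_def using bounded_domain
    by (intro borel_integrable_compact continuous_on_polymonial_function)
      (simp_all add: compact_closure real_polynomial_function_eq[symmetric] f)
  then show ?thesis
    by (rule set_integrable_subset) (auto simp: closure_subset borel_open open_domain)
qed

lemma ess_bounded_bounded_on_frontier: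
  assumes "f \<in> borel_measurable S" "bounded (f ` frontier \<Omega>)"
  shows "ess_bounded S f"
proof -
  obtain B where B: "\<forall>y\<in>f ` frontier \<Omega>. norm y \<le> B"
    using assms(2) bounded_iff by metis
  have "AE x in S. \<bar>f x\<bar> \<le> B"
    using AE_frontier by eventually_elim (use B in auto)
  with assms(1) show ?thesis
    unfolding ess_bounded_def by blast
qed

lemma ess_bounded_polynomial:
  assumes "real_polynomial_function f"
  shows "ess_bounded S f"
proof (rule ess_bounded_bounded_on_frontier)
  show "f \<in> borel_measurable S"
    unfolding borel_measurable_boundary using assms
    by (intro borel_measurable_continuous_onI continuous_on_polymonial_function)
      (simp add: real_polynomial_function_eq[symmetric])
  have "polynomial_function f"
    using assms by (simp add: real_polynomial_function_eq)
  then show "bounded (f ` frontier \<Omega>)"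
    using continuous_on_polymonial_function compact_frontier_bounded[OF bounded_domain]
    by (blast intro: compact_imp_bounded compact_continuous_image)
qed

lemma ess_bounded_grad: "real_polynomial_function f \<Longrightarrow> ess_bounded S (\<lambda>x. grad f x $ i)"
  by (intro ess_bounded_polynomial real_polynomial_function_grad)

lemma integrable_boundary: "ess_bounded S f \<Longrightarrow> integrable S f"
  by (rule integrable_ess_bounded[OF finite_measure_boundary])

lemma ess_bounded_component:
  fixes g :: "real^'n \<Rightarrow> real^'m::finite"
  assumes "g \<in> borel_measurable S" "AE x in S. norm (g x) \<le> B"
  shows "ess_bounded S (\<lambda>x. g x $ i)"
proof -
  have "AE x in S. \<bar>g x $ i\<bar> \<le> B"
    using assms(2) by eventually_elim (use component_le_norm_cart order_trans in blast)
  moreover have "(\<lambda>x. g x \<bullet> axis i 1) \<in> borel_measurable S"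
    using assms(1) by (intro borel_measurable_inner borel_measurable_const)
  then have "(\<lambda>x. g x $ i) \<in> borel_measurable S"
    by (simp add: inner_axis)
  ultimately show ?thesis
    unfolding ess_bounded_def by blast
qed

lemma ess_bounded_nrm: "ess_bounded S (\<lambda>x. nrm x $ i)"
  using AE_norm_nrm by (intro ess_bounded_component[OF nrm_measurable]) auto

lemma ess_bounded_flux:
  assumes "flux_ok \<Omega> S vs gs"
  shows "ess_bounded S vs" and "ess_bounded S (\<lambda>x. gs x $ i)"
proof -
  show "ess_bounded S vs"
    using assms by (intro ess_bounded_bounded_on_frontier) (auto simp: flux_ok_def)
  obtain B where B: "\<forall>y\<in>gs ` frontier \<Omega>. norm y \<le> B"
    using assms bounded_iff by (metis flux_ok_def)
  have "AE x in S. norm (gs x) \<le> B"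
    using AE_frontier by eventually_elim (use B in auto)
  then show "ess_bounded S (\<lambda>x. gs x $ i)"
    using assms by (intro ess_bounded_component) (auto simp: flux_ok_def)
qed

lemma divergence_polynomial:
  assumes "real_polynomial_function g"
  shows "(LINT x:\<Omega>|lborel. grad g x $ i) = (LINT x|S. g x * nrm x $ i)"
proof -
  obtain k where "g \<in> polys k"
    using real_polynomial_function_in_polys[OF assms] by blast
  with element have "(LINT x:\<Omega>|lborel. frechet_derivative g (at x) (axis i 1)) = (LINT x|S. g x * nrm x $ i)"
    unfolding dg_element_def by blast
  then show ?thesis
    by (simp add: grad_def)
qed

lemma divergence_transport:
  assumes "real_polynomial_function g"
  shows "(LINT x:\<Omega>|lborel. w \<bullet> grad g x) = (LINT x|S. g x * (w \<bullet> nrm x))"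
proof -
  have "(LINT x:\<Omega>|lborel. w \<bullet> grad g x) = (\<Sum>i\<in>UNIV. w $ i * (LINT x:\<Omega>|lborel. grad g x $ i))"
    unfolding inner_vec_def inner_real_def
    using assms
    by (subst set_integral_sum) (auto intro!: set_integrable_polynomial real_polynomial_function_cmult
        real_polynomial_function_grad)
  also have "\<dots> = (\<Sum>i\<in>UNIV. w $ i * (LINT x|S. g x * nrm x $ i))"
    using assms by (simp add: divergence_polynomial)
  also have "\<dots> = (\<Sum>i\<in>UNIV. LINT x|S. w $ i * (g x * nrm x $ i))"
    by simp
  also have "\<dots> = (LINT x|S. (\<Sum>i\<in>UNIV. w $ i * (g x * nrm x $ i)))"
    by (rule Bochner_Integration.integral_sum[symmetric])
      (intro integrable_boundary ess_bounded_mult ess_bounded_const ess_bounded_polynomial assms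
        ess_bounded_nrm)
  also have "\<dots> = (LINT x|S. g x * (w \<bullet> nrm x))"
    by (simp add: inner_vec_def sum_distrib_left algebra_simps)
  finally show ?thesis .
qed

lemma polynomial_eq_0_if_integral_eq_0:
  assumes h: "real_polynomial_function h" and nonneg: "\<And>x. 0 \<le> h x"
    and zero: "(LINT x:\<Omega>|lborel. h x) = 0"
  shows "h y = 0"
proof -
  define U where "U = \<Omega> \<inter> {x. 0 < h x}"
  have "open U"
    unfolding U_def using open_domain h
    by (intro open_Int open_Collect_less continuous_on_const continuous_on_polymonial_function)
      (simp_all add: real_polynomial_function_eq[symmetric])
  have "AE x in lborel. indicator \<Omega> x * h x = 0"
    using zero set_integrable_polynomial[OF h] nonneg
    unfolding set_lebesgue_integral_def set_integrable_def
    by (subst integral_nonneg_eq_0_iff_AE[symmetric]) auto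
  then have "AE x in lborel. x \<notin> U"
    by eventually_elim (auto simp: U_def)
  then have "U \<in> null_sets lborel"
    using AE_iff_null_sets[of U lborel] \<open>open U\<close> by (simp add: borel_open)
  then have "negligible U"
    by (simp add: negligible_iff_null_sets null_sets_completionI)
  then have "U = {}"
    using open_not_negligible \<open>open U\<close> by blast
  then have "h x = 0" if "x \<in> \<Omega>" for x
    using that nonneg[of x] by (auto simp: U_def)
  moreover obtain x0 where "x0 \<in> \<Omega>"
    using domain_nonempty by blast
  ultimately show ?thesis
    using real_polynomial_function_zero_on_open[OF h open_domain] by blast
qed

lemma integral_one_neq_0: "(LINT x:\<Omega>|lborel. 1::real) \<noteq> 0"
  using polynomial_eq_0_if_integral_eq_0[of "\<lambda>x. 1"] by auto

definition mass :: "(real^'n \<Rightarrow> real) \<Rightarrow> (real^'n \<Rightarrow> real) \<Rightarrow> real" where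
  "mass f g = (LINT x:\<Omega>|lborel. f x * g x)"

definition stiffness :: "(real^'n \<Rightarrow> real) \<Rightarrow> (real^'n \<Rightarrow> real) \<Rightarrow> real" where
  "stiffness f g = (LINT x:\<Omega>|lborel. grad f x \<bullet> grad g x)"

lemma linear_functional_on_mass:
  "real_polynomial_function h \<Longrightarrow> linear_functional_on (Collect real_polynomial_function) (\<lambda>f. mass f h)"
  unfolding mass_def
  by (intro linear_functional_on_set_integral set_integrable_polynomial)
    (auto simp: algebra_simps)

lemma linear_functional_on_stiffness:
  "real_polynomial_function h \<Longrightarrow> linear_functional_on (Collect real_polynomial_function) (\<lambda>f. stiffness f h)"
  unfolding stiffness_def
  by (intro linear_functional_on_set_integral set_integrable_polynomial real_polynomial_function_inner_grad)
    (auto simp: grad_lincomb differentiable_at_real_polynomial_function inner_add_left)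

lemma inner_product_on_mass: "inner_product_on (Collect real_polynomial_function) mass"
  unfolding inner_product_on_def symmetric_bilinear_on_def
proof (intro conjI ballI impI)
  fix f g :: "real^'n \<Rightarrow> real"
  show "mass f g = mass g f"
    by (simp add: mass_def mult.commute)
next
  fix f :: "real^'n \<Rightarrow> real"
  assume f: "f \<in> Collect real_polynomial_function"
  show "0 \<le> mass f f"
    unfolding mass_def set_lebesgue_integral_def
    by (rule Bochner_Integration.integral_nonneg) (simp add: indicator_def)
  show "f = (\<lambda>x. 0)" if "mass f f = 0"
  proof
    fix y
    have "real_polynomial_function (\<lambda>x. f x * f x)"
      using f by (simp add: real_polynomial_function.intros(4))
    then have "f y * f y = 0"
      by (rule polynomial_eq_0_if_integral_eq_0[where h="\<lambda>x. f x * f x"]) (use that in \<open>simp_all add: mass_def\<close>)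
    then show "f y = 0"
      by simp
  qed
qed (simp add: linear_functional_on_mass)

lemma symmetric_bilinear_on_stiffness: "symmetric_bilinear_on (Collect real_polynomial_function) stiffness"
proof -
  have "stiffness f g = stiffness g f" for f g
    by (simp add: stiffness_def inner_commute)
  then show ?thesis
    unfolding symmetric_bilinear_on_def using linear_functional_on_stiffness by simp
qed

text \<open>The stiffness form vanishes on constants; adding the product of the means makes it definite.\<close>

definition stiffness_mean :: "(real^'n \<Rightarrow> real) \<Rightarrow> (real^'n \<Rightarrow> real) \<Rightarrow> real" where
  "stiffness_mean f g = stiffness f g + (LINT x:\<Omega>|lborel. f x) * (LINT x:\<Omega>|lborel. g x)"

lemma grad_eq_0_if_stiffness_eq_0:
  assumes f: "real_polynomial_function f" and "stiffness f f = 0"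
  shows "grad f x = 0"
proof -
  have "grad f x \<bullet> grad f x = 0"
    by (rule polynomial_eq_0_if_integral_eq_0[where h="\<lambda>x. grad f x \<bullet> grad f x"])
      (use assms in \<open>simp_all add: stiffness_def real_polynomial_function_inner_grad\<close>)
  then show ?thesis
    by simp
qed

lemma linear_functional_on_integral_polynomial:
  "linear_functional_on (Collect real_polynomial_function) (\<lambda>f. LINT x:\<Omega>|lborel. f x)"
  by (intro linear_functional_on_set_integral set_integrable_polynomial) auto

lemma stiffness_nonneg: "0 \<le> stiffness f f"
  unfolding stiffness_def set_lebesgue_integral_def
  by (rule Bochner_Integration.integral_nonneg) (simp add: indicator_def)

lemma polynomial_eq_0_if_stiffness_mean_eq_0:
  assumes f: "real_polynomial_function f" and "stiffness_mean f f = 0"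
  shows "f = (\<lambda>x. 0)"
proof -
  have "stiffness f f = 0" and mean: "(LINT x:\<Omega>|lborel. f x) = 0"
    using assms(2) stiffness_nonneg[of f] by (simp_all add: stiffness_mean_def add_nonneg_eq_0_iff)
  then have "grad f x = 0" for x
    using f grad_eq_0_if_stiffness_eq_0 by simp
  then have "f x = f 0" for x
    using f by (intro grad_eq_0_imp_constant) auto
  then obtain C where C: "\<And>x. f x = C"
    by blast
  then have "(LINT x:\<Omega>|lborel. C * 1) = 0"
    using mean by simp
  then have "C * (LINT x:\<Omega>|lborel. 1) = 0"
    by (simp only: set_integral_mult_right)
  with integral_one_neq_0 C show ?thesis
    by (simp add: fun_eq_iff)
qed

lemma inner_product_on_stiffness_mean:
  "inner_product_on (Collect real_polynomial_function) stiffness_mean"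
proof -
  have "linear_functional_on (Collect real_polynomial_function) (\<lambda>f. stiffness_mean f h)"
    if "real_polynomial_function h" for h
    using linear_functional_on_stiffness[OF that] linear_functional_on_integral_polynomial
    by (simp add: linear_functional_on_def stiffness_mean_def algebra_simps)
  moreover have "stiffness_mean f g = stiffness_mean g f" for f g
    by (simp add: stiffness_mean_def stiffness_def inner_commute)
  moreover have "0 \<le> stiffness_mean f f" for f
    using stiffness_nonneg[of f] by (simp add: stiffness_mean_def)
  ultimately show ?thesis
    unfolding inner_product_on_def symmetric_bilinear_on_def
    using polynomial_eq_0_if_stiffness_mean_eq_0 by auto
qed

lemma ess_bounded_flux_grad_term:
  assumes "real_polynomial_function \<phi>" "real_polynomial_function u" "real_polynomial_function v"
    and "flux_ok \<Omega> S vs gs"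
  shows "ess_bounded S (\<lambda>x. c\<^sup>2 * (vs x - v x) * (grad \<phi> x \<bullet> nrm x)
                   - c\<^sup>2 * (grad \<phi> x \<bullet> (gs x - grad u x)) * (w \<bullet> nrm x))"
  using ess_bounded_polynomial[OF assms(3)] ess_bounded_flux[OF assms(4)] ess_bounded_grad[OF assms(1)]
    ess_bounded_grad[OF assms(2)] ess_bounded_nrm
  by (intro ess_bounded_diff ess_bounded_mult ess_bounded_inner ess_bounded_const) (simp_all add: ess_bounded_diff)

lemma ess_bounded_flux_value_term:
  assumes "real_polynomial_function \<phi>" "real_polynomial_function v" "flux_ok \<Omega> S vs gs"
  shows "ess_bounded S (\<lambda>x. c\<^sup>2 * \<phi> x * (gs x \<bullet> nrm x) - (vs x - v x) * \<phi> x * (w \<bullet> nrm x))"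
  using ess_bounded_polynomial[OF assms(1)] ess_bounded_polynomial[OF assms(2)] ess_bounded_flux[OF assms(3)]
    ess_bounded_nrm
  by (intro ess_bounded_diff ess_bounded_mult ess_bounded_inner ess_bounded_const) simp_all

lemma linear_functional_on_flux_grad_term:
  assumes "real_polynomial_function u" "real_polynomial_function v" "flux_ok \<Omega> S vs gs"
  shows "linear_functional_on (Collect real_polynomial_function)
    (\<lambda>\<phi>. LINT x|S. c\<^sup>2 * (vs x - v x) * (grad \<phi> x \<bullet> nrm x)
                   - c\<^sup>2 * (grad \<phi> x \<bullet> (gs x - grad u x)) * (w \<bullet> nrm x))"
  using assms
  by (intro linear_functional_on_integral integrable_boundary ess_bounded_flux_grad_term)
    (simp_all only: mem_Collect_eq grad_lincomb differentiable_at_real_polynomial_function,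
      simp add: algebra_simps inner_add_left)

lemma linear_functional_on_flux_value_term:
  assumes "real_polynomial_function v" "flux_ok \<Omega> S vs gs"
  shows "linear_functional_on (Collect real_polynomial_function)
    (\<lambda>\<phi>. LINT x|S. c\<^sup>2 * \<phi> x * (gs x \<bullet> nrm x) - (vs x - v x) * \<phi> x * (w \<bullet> nrm x))"
  using assms
  by (intro linear_functional_on_integral integrable_boundary ess_bounded_flux_value_term)
    (auto simp: algebra_simps)

lemma stiffness_transport_residual:
  assumes "real_polynomial_function \<phi>" "real_polynomial_function ut"
    and "real_polynomial_function u" "real_polynomial_function v"
  shows "(LINT x:\<Omega>|lborel. c\<^sup>2 * (grad \<phi> x \<bullet> grad (\<lambda>y. ut y + w \<bullet> grad u y - v y) x))
    = c\<^sup>2 * (stiffness \<phi> ut + stiffness \<phi> (\<lambda>y. w \<bullet> grad u y - v y))"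
proof -
  have poly: "real_polynomial_function (\<lambda>y. w \<bullet> grad u y)"
    using assms(3) by (rule real_polynomial_function_directional_grad)
  have "grad (\<lambda>y. ut y + w \<bullet> grad u y - v y) x = grad ut x + grad (\<lambda>y. w \<bullet> grad u y - v y) x" for x
    using assms poly
    by (simp add: grad_add grad_diff differentiable_at_real_polynomial_function real_polynomial_function_diff
        real_polynomial_function.intros(3))
  then show ?thesis
    using assms poly unfolding stiffness_def
    by (simp add: inner_add_right set_integrable_polynomial real_polynomial_function_inner_grad
        real_polynomial_function_diff)
qed

lemma mean_condition_iff:
  assumes "real_polynomial_function ut" "real_polynomial_function u" "real_polynomial_function v"
  shows "(\<forall>k::real. (LINT x:\<Omega>|lborel. k * (ut x + w \<bullet> grad u x - v x)) = 0)
    \<longleftrightarrow> (LINT x:\<Omega>|lborel. ut x) + (LINT x:\<Omega>|lborel. w \<bullet> grad u x - v x) = 0"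
proof -
  have "(LINT x:\<Omega>|lborel. ut x + w \<bullet> grad u x - v x)
      = (LINT x:\<Omega>|lborel. ut x) + (LINT x:\<Omega>|lborel. w \<bullet> grad u x - v x)"
    using assms
    by (simp add: add_diff_eq[symmetric] set_integrable_polynomial real_polynomial_function_diff
        real_polynomial_function_directional_grad)
  moreover have "(\<forall>k::real. k * I = 0) \<longleftrightarrow> I = 0" for I :: real
    by (metis mult_1 mult_zero_right)
  ultimately show ?thesis
    by (simp only: set_integral_mult_right)
qed

text \<open>Testing the equation for \<open>stiffness_mean\<close> with the constant polynomial recovers the mean
  condition (3), on which (1) carries no information.\<close>

lemma transport_equations_iff:
  fixes w :: "real^'n"
  assumes ut: "ut \<in> polys q" and u: "real_polynomial_function u" and v: "real_polynomial_function v"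
    and c: "c \<noteq> 0" and R: "R (\<lambda>x. 1) = 0"
  defines "h \<equiv> \<lambda>y. w \<bullet> grad u y - v y"
  shows "(\<forall>\<phi>\<in>polys q.
            (LINT x:\<Omega>|lborel. c\<^sup>2 * (grad \<phi> x \<bullet> grad (\<lambda>y. ut y + w \<bullet> grad u y - v y) x)) = R \<phi>) \<and>
         (\<forall>k::real. (LINT x:\<Omega>|lborel. k * (ut x + w \<bullet> grad u x - v x)) = 0)
     \<longleftrightarrow> (\<forall>\<psi>\<in>polys q. stiffness_mean \<psi> ut
            = R \<psi> / c\<^sup>2 - stiffness \<psi> h - (LINT x:\<Omega>|lborel. \<psi> x) * (LINT x:\<Omega>|lborel. h x))"
    (is "(\<forall>\<phi>\<in>polys q. ?lhs \<phi> = R \<phi>) \<and> ?mean \<longleftrightarrow> (\<forall>\<psi>\<in>polys q. stiffness_mean \<psi> ut = ?F \<psi>)")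
proof -
  let ?I = "\<lambda>f. LINT x:\<Omega>|lborel. f x"
  have ut': "real_polynomial_function ut"
    using ut by (rule real_polynomial_function_polys)
  have lhs: "?lhs \<phi> = c\<^sup>2 * (stiffness \<phi> ut + stiffness \<phi> h)" if "\<phi> \<in> polys q" for \<phi>
    unfolding h_def using real_polynomial_function_polys[OF that] ut' u v by (rule stiffness_transport_residual)
  have mean: "?mean \<longleftrightarrow> ?I ut + ?I h = 0"
    unfolding h_def using ut' u v by (rule mean_condition_iff)
  have "stiffness_mean (\<lambda>x. 1) ut = ?F (\<lambda>x. 1) \<longleftrightarrow> ?I (\<lambda>x. 1) * (?I ut + ?I h) = 0"
    using R by (auto simp: stiffness_mean_def stiffness_def algebra_simps)
  then have one: "stiffness_mean (\<lambda>x. 1) ut = ?F (\<lambda>x. 1) \<longleftrightarrow> ?I ut + ?I h = 0"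
    using integral_one_neq_0 by simp
  have key: "stiffness_mean \<psi> ut = ?F \<psi> \<longleftrightarrow> ?lhs \<psi> = R \<psi>"
    if "?I ut + ?I h = 0" "\<psi> \<in> polys q" for \<psi>
  proof -
    have "?I ut = - ?I h"
      using that(1) by linarith
    then have "stiffness_mean \<psi> ut - ?F \<psi> = (?lhs \<psi> - R \<psi>) / c\<^sup>2"
      using lhs[OF that(2)] c by (simp add: stiffness_mean_def field_simps)
    then show ?thesis
      using c by (simp add: eq_iff_diff_eq_0[of "stiffness_mean \<psi> ut"] eq_iff_diff_eq_0[of "?lhs \<psi>"])
  qed
  show ?thesis
    using key one mean const_in_polys by blast
qed

lemma transport_update_ex1:
  assumes u: "real_polynomial_function u" and v: "real_polynomial_function v"
    and fl: "flux_ok \<Omega> S vs gs" and c: "c \<noteq> 0"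
  shows "\<exists>!ut. ut \<in> polys q \<and>
     (\<forall>\<phi>\<in>polys q.
        (LINT x:\<Omega>|lborel. c\<^sup>2 * (grad \<phi> x \<bullet> grad (\<lambda>y. ut y + w \<bullet> grad u y - v y) x))
        = (LINT x|S. c\<^sup>2 * (vs x - v x) * (grad \<phi> x \<bullet> nrm x)
                     - c\<^sup>2 * (grad \<phi> x \<bullet> (gs x - grad u x)) * (w \<bullet> nrm x))) \<and>
     (\<forall>k::real. (LINT x:\<Omega>|lborel. k * (ut x + w \<bullet> grad u x - v x)) = 0)"
    (is "\<exists>!ut. ut \<in> polys q \<and> ?equations ut")
proof -
  let ?P = "Collect real_polynomial_function" and ?I = "\<lambda>f. LINT x:\<Omega>|lborel. f x"
  define R where "R \<phi> = (LINT x|S. c\<^sup>2 * (vs x - v x) * (grad \<phi> x \<bullet> nrm x)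
                     - c\<^sup>2 * (grad \<phi> x \<bullet> (gs x - grad u x)) * (w \<bullet> nrm x))" for \<phi>
  define h where "h = (\<lambda>y. w \<bullet> grad u y - v y)"
  define F where "F \<phi> = R \<phi> / c\<^sup>2 - stiffness \<phi> h - ?I \<phi> * ?I h" for \<phi>
  have h: "real_polynomial_function h"
    unfolding h_def using u v by (intro real_polynomial_function_diff real_polynomial_function_directional_grad)
  have VP: "polys q \<subseteq> ?P"
    using real_polynomial_function_polys by blast
  have "linear_functional_on ?P F"
    using linear_functional_on_integral_polynomial linear_functional_on_flux_grad_term[OF u v fl]
      linear_functional_on_stiffness[OF h]
    by (simp add: linear_functional_on_def F_def R_def add_divide_distrib algebra_simps)
  then have "\<exists>!ut. ut \<in> polys q \<and> (\<forall>\<psi>\<in>polys q. stiffness_mean \<psi> ut = F \<psi>)"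
    using inner_product_on_subset[OF inner_product_on_stiffness_mean VP]
      linear_functional_on_subset[OF _ VP]
    unfolding polys_eq_lincomb by (intro lincomb_riesz_representation finite_multi_idx) auto
  moreover have "ut \<in> polys q \<and> ?equations ut
      \<longleftrightarrow> ut \<in> polys q \<and> (\<forall>\<psi>\<in>polys q. stiffness_mean \<psi> ut = F \<psi>)" for ut
    using transport_equations_iff[OF _ u v c, where ut=ut and R=R] unfolding F_def h_def R_def by auto
  ultimately show ?thesis
    by (simp only:)
qed

lemma value_equation_split:
  assumes "real_polynomial_function \<phi>" "real_polynomial_function vt"
    and "real_polynomial_function u" "real_polynomial_function v"
  shows "(LINT x:\<Omega>|lborel. \<phi> x * vt x + \<phi> x * (w \<bullet> grad v x) + c\<^sup>2 * (grad u x \<bullet> grad \<phi> x))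
    = mass \<phi> vt + mass \<phi> (\<lambda>x. w \<bullet> grad v x) + c\<^sup>2 * stiffness \<phi> u"
  using assms real_polynomial_function_directional_grad[OF assms(4)]
  by (simp add: mass_def stiffness_def inner_commute set_integrable_polynomial
      real_polynomial_function_inner_grad real_polynomial_function.intros(3,4) real_polynomial_function_cmult)

lemma value_update_ex1:
  assumes u: "real_polynomial_function u" and v: "real_polynomial_function v" and fl: "flux_ok \<Omega> S vs gs"
  shows "\<exists>!vt. vt \<in> polys s \<and>
     (\<forall>\<phi>\<in>polys s.
        (LINT x:\<Omega>|lborel. \<phi> x * vt x + \<phi> x * (w \<bullet> grad v x) + c\<^sup>2 * (grad u x \<bullet> grad \<phi> x))
        = (LINT x|S. c\<^sup>2 * \<phi> x * (gs x \<bullet> nrm x) - (vs x - v x) * \<phi> x * (w \<bullet> nrm x)))"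
    (is "\<exists>!vt. vt \<in> polys s \<and> (\<forall>\<phi>\<in>polys s. ?lhs \<phi> vt = ?rhs \<phi>)")
proof -
  let ?P = "Collect real_polynomial_function"
  define F where "F = (\<lambda>\<phi>. ?rhs \<phi> - mass \<phi> (\<lambda>x. w \<bullet> grad v x) - c\<^sup>2 * stiffness \<phi> u)"
  have wv: "real_polynomial_function (\<lambda>x. w \<bullet> grad v x)"
    using v by (rule real_polynomial_function_directional_grad)
  have VP: "polys s \<subseteq> ?P"
    using real_polynomial_function_polys by blast
  have "linear_functional_on ?P F"
    using linear_functional_on_flux_value_term[OF v fl] inner_product_on_mass wv
      linear_functional_on_stiffness[OF u]
    by (simp add: linear_functional_on_def inner_product_on_def symmetric_bilinear_on_def F_def
        algebra_simps)
  then have "\<exists>!vt. vt \<in> polys s \<and> (\<forall>\<psi>\<in>polys s. mass \<psi> vt = F \<psi>)"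
    using inner_product_on_subset[OF inner_product_on_mass VP] linear_functional_on_subset[OF _ VP]
    unfolding polys_eq_lincomb by (intro lincomb_riesz_representation finite_multi_idx) auto
  moreover have "?lhs \<phi> vt = mass \<phi> vt + mass \<phi> (\<lambda>x. w \<bullet> grad v x) + c\<^sup>2 * stiffness \<phi> u"
    if "\<phi> \<in> polys s" "vt \<in> polys s" for \<phi> vt
    using that VP u v by (intro value_equation_split) auto
  then have "vt \<in> polys s \<and> (\<forall>\<phi>\<in>polys s. ?lhs \<phi> vt = ?rhs \<phi>)
      \<longleftrightarrow> vt \<in> polys s \<and> (\<forall>\<psi>\<in>polys s. mass \<psi> vt = F \<psi>)" for vt
    by (auto simp: F_def eq_diff_eq)
  ultimately show ?thesis
    by (simp only:)
qed

lemma mass_transport: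
  assumes V: "real_polynomial_function V"
  shows "mass V (\<lambda>x. w \<bullet> grad V x) = (LINT x|S. 1/2 * (V x * V x) * (w \<bullet> nrm x))"
proof -
  have VV: "real_polynomial_function (\<lambda>x. V x * V x)"
    using V by (simp add: real_polynomial_function.intros(4))
  have "w \<bullet> grad (\<lambda>x. 1/2 * (V x * V x)) x = V x * (w \<bullet> grad V x)" for x
    unfolding grad_cmult[OF differentiable_at_real_polynomial_function[OF VV]] inner_scaleR_right
      directional_grad_square[OF V] by simp
  then have "mass V (\<lambda>x. w \<bullet> grad V x) = (LINT x:\<Omega>|lborel. w \<bullet> grad (\<lambda>x. 1/2 * (V x * V x)) x)"
    unfolding mass_def by simp
  also have "\<dots> = (LINT x|S. 1/2 * (V x * V x) * (w \<bullet> nrm x))"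
    by (rule divergence_transport) (rule real_polynomial_function_cmult[OF VV])
  finally show ?thesis .
qed

lemma stiffness_transport:
  assumes U: "real_polynomial_function U"
  shows "stiffness U (\<lambda>x. w \<bullet> grad U x) = (LINT x|S. 1/2 * (grad U x \<bullet> grad U x) * (w \<bullet> nrm x))"
proof -
  have UU: "real_polynomial_function (\<lambda>x. grad U x \<bullet> grad U x)"
    using U U by (rule real_polynomial_function_inner_grad)
  have "w \<bullet> grad (\<lambda>x. 1/2 * (grad U x \<bullet> grad U x)) x = grad U x \<bullet> grad (\<lambda>y. w \<bullet> grad U y) x" for x
    unfolding grad_cmult[OF differentiable_at_real_polynomial_function[OF UU]] inner_scaleR_right
      directional_grad_grad_square[OF U] by simp
  then have "stiffness U (\<lambda>x. w \<bullet> grad U x)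
      = (LINT x:\<Omega>|lborel. w \<bullet> grad (\<lambda>x. 1/2 * (grad U x \<bullet> grad U x)) x)"
    unfolding stiffness_def by (simp only:)
  also have "\<dots> = (LINT x|S. 1/2 * (grad U x \<bullet> grad U x) * (w \<bullet> nrm x))"
    by (rule divergence_transport) (rule real_polynomial_function_cmult[OF UU])
  finally show ?thesis .
qed

lemma dg_energy_eq:
  assumes "real_polynomial_function U" "real_polynomial_function V"
  shows "dg_energy \<Omega> c U V = 1/2 * mass V V + c\<^sup>2 / 2 * stiffness U U"
  using assms unfolding dg_energy_def power2_norm_eq_inner
  by (simp add: mass_def stiffness_def power2_eq_square set_integrable_polynomial real_polynomial_function_inner_grad real_polynomial_function.intros(4)
      real_polynomial_function_cmult)

lemma has_real_derivative_dg_energy: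
  assumes T: "open T" "t \<in> T"
    and UV: "\<And>\<tau>. \<tau> \<in> T \<Longrightarrow> U \<tau> \<in> polys q \<and> V \<tau> \<in> polys s"
    and Ut: "Ut \<in> polys q" and Vt: "Vt \<in> polys s"
    and dU: "\<And>x. ((\<lambda>\<tau>. U \<tau> x) has_real_derivative Ut x) (at t)"
    and dV: "\<And>x. ((\<lambda>\<tau>. V \<tau> x) has_real_derivative Vt x) (at t)"
  shows "((\<lambda>\<tau>. dg_energy \<Omega> c (U \<tau>) (V \<tau>)) has_real_derivative
           mass (V t) Vt + c\<^sup>2 * stiffness (U t) Ut) (at t)"
proof -
  have sub: "polys k \<subseteq> Collect real_polynomial_function" for k
    using real_polynomial_function_polys by blast
  have "((\<lambda>\<tau>. mass (V \<tau>) (V \<tau>)) has_real_derivative 2 * mass (V t) Vt) (at t)"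
    using symmetric_bilinear_on_subset[OF inner_product_on_mass[unfolded inner_product_on_def, THEN conjunct1] sub]
    unfolding polys_eq_lincomb
    by (intro lincomb_quadratic_form_has_real_derivative[where B=mass and f=V, OF finite_multi_idx _ T] dV)
      (use UV Vt in \<open>auto simp: polys_eq_lincomb\<close>)
  moreover have "((\<lambda>\<tau>. stiffness (U \<tau>) (U \<tau>)) has_real_derivative 2 * stiffness (U t) Ut) (at t)"
    using symmetric_bilinear_on_subset[OF symmetric_bilinear_on_stiffness sub]
    unfolding polys_eq_lincomb
    by (intro lincomb_quadratic_form_has_real_derivative[where B=stiffness and f=U, OF finite_multi_idx _ T] dU)
      (use UV Ut in \<open>auto simp: polys_eq_lincomb\<close>)
  ultimately have "((\<lambda>\<tau>. 1/2 * mass (V \<tau>) (V \<tau>) + c\<^sup>2 / 2 * stiffness (U \<tau>) (U \<tau>)) has_real_derivative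
      mass (V t) Vt + c\<^sup>2 * stiffness (U t) Ut) (at t)"
    by (auto intro!: derivative_eq_intros)
  then show ?thesis
  proof (rule has_field_derivative_transform_within_open[OF _ T])
    fix \<tau> assume "\<tau> \<in> T"
    then have "real_polynomial_function (U \<tau>)" "real_polynomial_function (V \<tau>)"
      using UV real_polynomial_function_polys by blast+
    then show "1/2 * mass (V \<tau>) (V \<tau>) + c\<^sup>2 / 2 * stiffness (U \<tau>) (U \<tau>) = dg_energy \<Omega> c (U \<tau>) (V \<tau>)"
      by (simp add: dg_energy_eq)
  qed
qed

lemma stiffness_diff_right:
  assumes "real_polynomial_function \<phi>" "real_polynomial_function f" "real_polynomial_function g"
  shows "stiffness \<phi> (\<lambda>x. f x - g x) = stiffness \<phi> f - stiffness \<phi> g"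
  using assms
  by (simp add: stiffness_def grad_diff differentiable_at_real_polynomial_function inner_diff_right
      set_integrable_polynomial real_polynomial_function_inner_grad)

lemma energy_flux_split:
  fixes c :: real and w :: "real^'n"
  assumes U: "real_polynomial_function U" and V: "real_polynomial_function V" and fl: "flux_ok \<Omega> S vs gs"
  defines "R1 \<equiv> \<lambda>x. c\<^sup>2 * (vs x - V x) * (grad U x \<bullet> nrm x)
                   - c\<^sup>2 * (grad U x \<bullet> (gs x - grad U x)) * (w \<bullet> nrm x)"
    and "R2 \<equiv> \<lambda>x. c\<^sup>2 * V x * (gs x \<bullet> nrm x) - (vs x - V x) * V x * (w \<bullet> nrm x)"
    and "K1 \<equiv> \<lambda>x. 1/2 * (V x * V x) * (w \<bullet> nrm x)"
    and "K2 \<equiv> \<lambda>x. 1/2 * (grad U x \<bullet> grad U x) * (w \<bullet> nrm x)"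
  shows "energy_flux S nrm c w U V vs gs
    = (LINT x|S. R1 x) + (LINT x|S. R2 x) - (LINT x|S. K1 x) - c\<^sup>2 * (LINT x|S. K2 x)"
proof -
  have "ess_bounded S R1" "ess_bounded S R2"
    unfolding R1_def R2_def using U V fl by (auto intro: ess_bounded_flux_grad_term ess_bounded_flux_value_term)
  moreover have "ess_bounded S K1" "ess_bounded S K2"
    unfolding K1_def K2_def using ess_bounded_polynomial[OF V] ess_bounded_grad[OF U] ess_bounded_nrm
    by (intro ess_bounded_mult ess_bounded_const ess_bounded_inner; simp)+
  ultimately have "(LINT x|S. R1 x) + (LINT x|S. R2 x) - (LINT x|S. K1 x) - c\<^sup>2 * (LINT x|S. K2 x)
      = (LINT x|S. R1 x + R2 x - K1 x - c\<^sup>2 * K2 x)"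
    by (simp add: integrable_boundary ess_bounded_add ess_bounded_diff ess_bounded_mult)
  also have "\<dots> = energy_flux S nrm c w U V vs gs"
    unfolding energy_flux_def R1_def R2_def K1_def K2_def power2_norm_eq_inner
    by (simp add: power2_eq_square algebra_simps)
  finally show ?thesis
    by simp
qed

lemma energy_balance:
  assumes U: "U \<in> polys q" and V: "V \<in> polys s" and Ut: "Ut \<in> polys q" and Vt: "Vt \<in> polys s"
    and fl: "flux_ok \<Omega> S vs gs" and scheme: "dg_scheme \<Omega> S nrm c w q s U V vs gs Ut Vt"
  shows "mass V Vt + c\<^sup>2 * stiffness U Ut = energy_flux S nrm c w U V vs gs"
proof -
  have U': "real_polynomial_function U" and V': "real_polynomial_function V"
    and Ut': "real_polynomial_function Ut" and Vt': "real_polynomial_function Vt"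
    using assms real_polynomial_function_polys by blast+
  have WU: "real_polynomial_function (\<lambda>x. w \<bullet> grad U x)"
    using U' by (rule real_polynomial_function_directional_grad)
  have "(LINT x:\<Omega>|lborel. c\<^sup>2 * (grad U x \<bullet> grad (\<lambda>y. Ut y + w \<bullet> grad U y - V y) x))
      = (LINT x|S. c\<^sup>2 * (vs x - V x) * (grad U x \<bullet> nrm x)
                   - c\<^sup>2 * (grad U x \<bullet> (gs x - grad U x)) * (w \<bullet> nrm x))"
    using scheme U unfolding dg_scheme_def by blast
  moreover have "(LINT x:\<Omega>|lborel. V x * Vt x + V x * (w \<bullet> grad V x) + c\<^sup>2 * (grad U x \<bullet> grad V x))
      = (LINT x|S. c\<^sup>2 * V x * (gs x \<bullet> nrm x) - (vs x - V x) * V x * (w \<bullet> nrm x))"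
    using scheme V unfolding dg_scheme_def by blast
  moreover have "stiffness V U = stiffness U V"
    by (simp add: stiffness_def inner_commute)
  ultimately show ?thesis
    unfolding energy_flux_split[OF U' V' fl] stiffness_transport_residual[OF U' Ut' U' V']
      stiffness_diff_right[OF U' WU V'] value_equation_split[OF V' Vt' U' V']
      mass_transport[OF V', symmetric] stiffness_transport[OF U', symmetric]
    by (simp add: algebra_simps)
qed

lemma dg_scheme_ex1:
  assumes "real_polynomial_function u" "real_polynomial_function v" "flux_ok \<Omega> S vs gs" "c \<noteq> 0"
  shows "\<exists>!p. fst p \<in> polys q \<and> snd p \<in> polys s \<and> dg_scheme \<Omega> S nrm c w q s u v vs gs (fst p) (snd p)"
  using ex1_prod[OF transport_update_ex1[OF assms] value_update_ex1[OF assms(1-3)]]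
  unfolding dg_scheme_def by (simp only: conj_ac)

end

theorem theorem2p1:
  fixes \<Omega> :: "(real^'n::finite) set" and S :: "(real^'n) measure"
    and nrm :: "real^'n \<Rightarrow> real^'n" and c :: real and w :: "real^'n" and q s :: nat
  assumes elem: "dg_element \<Omega> S nrm" and cpos: "c > 0"
  shows
    "(\<forall>u v vs gs. u \<in> polys q \<and> v \<in> polys s \<and> flux_ok \<Omega> S vs gs \<longrightarrow>
        (\<exists>!p. fst p \<in> polys q \<and> snd p \<in> polys s \<and>
              dg_scheme \<Omega> S nrm c w q s u v vs gs (fst p) (snd p)))
     \<and>
     (\<forall>T U V Ut Vt vs gs. open T \<and>
        (\<forall>t\<in>T. U t \<in> polys q \<and> V t \<in> polys s \<and> Ut t \<in> polys q \<and> Vt t \<in> polys s \<and>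
           flux_ok \<Omega> S (vs t) (gs t) \<and>
           (\<forall>x. ((\<lambda>\<tau>. U \<tau> x) has_real_derivative Ut t x) (at t)) \<and>
           (\<forall>x. ((\<lambda>\<tau>. V \<tau> x) has_real_derivative Vt t x) (at t)) \<and>
           dg_scheme \<Omega> S nrm c w q s (U t) (V t) (vs t) (gs t) (Ut t) (Vt t))
        \<longrightarrow> (\<forall>t\<in>T. ((\<lambda>\<tau>. dg_energy \<Omega> c (U \<tau>) (V \<tau>)) has_real_derivative
                        energy_flux S nrm c w (U t) (V t) (vs t) (gs t)) (at t)))"
proof -
  interpret element \<Omega> S nrm
    using elem by unfold_locales
  show ?thesis
  proof (intro conjI allI impI ballI, goal_cases)
    case (1 u v vs gs)
    then show ?case
      using cpos by (intro dg_scheme_ex1) (auto intro: real_polynomial_function_polys)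
  next
    case (2 T U V Ut Vt vs gs t)
    then have "((\<lambda>\<tau>. dg_energy \<Omega> c (U \<tau>) (V \<tau>)) has_real_derivative
        mass (V t) (Vt t) + c\<^sup>2 * stiffness (U t) (Ut t)) (at t)"
      by (intro has_real_derivative_dg_energy[of T]) auto
    moreover have "mass (V t) (Vt t) + c\<^sup>2 * stiffness (U t) (Ut t) = energy_flux S nrm c w (U t) (V t) (vs t) (gs t)"
      using 2 by (intro energy_balance) auto
    ultimately show ?case
      by simp
  qed
qed

end
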